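(* For every claw-free cubic graph $G$, $\nu_2(G) \geq \frac{5}{6}\cdot |V(G)|$.
   Context: Graphs are finite, without loops, possibly with multiple edges; a graph is cubic if every vertex has degree $3$, and claw-free if it has no induced subgraph isomorphic to $K_{1,3}$. For $k\geq 1$, $\nu_k(G)$ is the maximum number of edges of a $k$-edge-colorable subgraph of $G$. *)

theory Defs
  imports Complex_Main
begin

text \<open>Parallel edges are distinct elements of E with the same endpoints.\<close>
definition multigraph :: "'v set \<Rightarrow> 'e set \<Rightarrow> ('e \<Rightarrow> 'v set) \<Rightarrow> bool" where
  "multigraph V E ends \<longleftrightarrow> finite V \<and> finite E \<and>
     (\<forall>e\<in>E. ends e \<subseteq> V \<and> card (ends e) = 2)"

definition degree :: "'e set \<Rightarrow> ('e \<Rightarrow> 'v set) \<Rightarrow> 'v \<Rightarrow> nat" where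
  "degree E ends v = card {e\<in>E. v \<in> ends e}"

definition cubic :: "'v set \<Rightarrow> 'e set \<Rightarrow> ('e \<Rightarrow> 'v set) \<Rightarrow> bool" where
  "cubic V E ends \<longleftrightarrow> (\<forall>v\<in>V. degree E ends v = 3)"

definition adjacent :: "'e set \<Rightarrow> ('e \<Rightarrow> 'v set) \<Rightarrow> 'v \<Rightarrow> 'v \<Rightarrow> bool" where
  "adjacent E ends x y \<longleftrightarrow> (\<exists>e\<in>E. ends e = {x, y})"

definition claw_free :: "'v set \<Rightarrow> 'e set \<Rightarrow> ('e \<Rightarrow> 'v set) \<Rightarrow> bool" where
  "claw_free V E ends \<longleftrightarrow> \<not> (\<exists>v a b c. v \<in> V \<and> a \<in> V \<and> b \<in> V \<and> c \<in> V \<and>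
      distinct [v, a, b, c] \<and>
      adjacent E ends v a \<and> adjacent E ends v b \<and> adjacent E ends v c \<and>
      \<not> adjacent E ends a b \<and> \<not> adjacent E ends a c \<and> \<not> adjacent E ends b c)"

definition k_edge_colorable :: "nat \<Rightarrow> ('e \<Rightarrow> 'v set) \<Rightarrow> 'e set \<Rightarrow> bool" where
  "k_edge_colorable k ends F \<longleftrightarrow> (\<exists>col :: 'e \<Rightarrow> nat.
     (\<forall>e\<in>F. col e < k) \<and>
     (\<forall>e1\<in>F. \<forall>e2\<in>F. e1 \<noteq> e2 \<and> ends e1 \<inter> ends e2 \<noteq> {} \<longrightarrow> col e1 \<noteq> col e2))"

definition nu :: "nat \<Rightarrow> 'e set \<Rightarrow> ('e \<Rightarrow> 'v set) \<Rightarrow> nat" where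
  "nu k E ends = Max {card F | F. F \<subseteq> E \<and> k_edge_colorable k ends F}"

end

theory Submission
  imports Defs
begin

text \<open>For every cubic multigraph, \<open>5 |V| \<le> 6 \<nu>\<^sub>2 + 2 c\<close>, where \<open>c\<close> is the number of claw centres;
  for claw-free graphs \<open>c = 0\<close>. This stronger bound is proved by induction on \<open>|V|\<close>. A vertex of a
  cubic multigraph is a claw centre exactly when it lies on no cycle of length 2 or 3, so every
  nonempty cubic multigraph contains a triple edge, a digon, a triangle, two adjacent claw centres, a
  claw centre next to a pendant digon, or a small closed component. Each of these is replaced by a
  smaller cubic multigraph such that every 2-edge-colourable subgraph of the new graph extends to one
  of the old graph with enough extra edges to pay for the deleted vertices and for the change of \<open>c\<close>.\<close>

definition incident :: "'e set \<Rightarrow> ('e \<Rightarrow> 'v set) \<Rightarrow> 'v \<Rightarrow> 'e set" where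
  "incident E ends v = {e\<in>E. v \<in> ends e}"

definition claw_centre :: "'v set \<Rightarrow> 'e set \<Rightarrow> ('e \<Rightarrow> 'v set) \<Rightarrow> 'v \<Rightarrow> bool" where
  "claw_centre V E ends v \<longleftrightarrow> (\<exists>a b c. v \<in> V \<and> a \<in> V \<and> b \<in> V \<and> c \<in> V \<and>
      distinct [v, a, b, c] \<and>
      adjacent E ends v a \<and> adjacent E ends v b \<and> adjacent E ends v c \<and>
      \<not> adjacent E ends a b \<and> \<not> adjacent E ends a c \<and> \<not> adjacent E ends b c)"

definition claw_count :: "'v set \<Rightarrow> 'e set \<Rightarrow> ('e \<Rightarrow> 'v set) \<Rightarrow> nat" where
  "claw_count V E ends = card {v\<in>V. claw_centre V E ends v}"

definition proper_2_coloring :: "('e \<Rightarrow> 'v set) \<Rightarrow> 'e set \<Rightarrow> ('e \<Rightarrow> nat) \<Rightarrow> bool" where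
  "proper_2_coloring ends F col \<longleftrightarrow> (\<forall>e\<in>F. col e < 2) \<and>
     (\<forall>e1\<in>F. \<forall>e2\<in>F. e1 \<noteq> e2 \<and> ends e1 \<inter> ends e2 \<noteq> {} \<longrightarrow> col e1 \<noteq> col e2)"

text \<open>\<open>y\<close> lies on a cycle of length 2 or 3.\<close>
definition on_short_cycle :: "'e set \<Rightarrow> ('e \<Rightarrow> 'v set) \<Rightarrow> 'v \<Rightarrow> bool" where
  "on_short_cycle E ends y \<longleftrightarrow> (\<exists>e1 e2 r s. e1 \<in> E \<and> e2 \<in> E \<and> e1 \<noteq> e2 \<and> ends e1 = {y, r} \<and>
      ends e2 = {y, s} \<and> (r = s \<or> adjacent E ends r s))"

lemma adjacentI: "e \<in> E \<Longrightarrow> ends e = {x, y} \<Longrightarrow> adjacent E ends x y"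
  unfolding adjacent_def by (rule bexI)

lemma adjacentE:
  assumes "adjacent E ends x y"
  obtains e where "e \<in> E" "ends e = {x, y}"
  using assms unfolding adjacent_def by blast

lemma adjacent_commute: "adjacent E ends x y = adjacent E ends y x"
  unfolding adjacent_def by (metis insert_commute)

lemma claw_free_iff_no_claw_centre: "claw_free V E ends \<longleftrightarrow> (\<forall>v. \<not> claw_centre V E ends v)"
  unfolding claw_free_def claw_centre_def by blast

lemma claw_count_eq_0_if_claw_free: "claw_free V E ends \<Longrightarrow> claw_count V E ends = 0"
  unfolding claw_count_def claw_free_iff_no_claw_centre by simp

lemma claw_centreI:
  assumes "y \<in> V" "a \<in> V" "b \<in> V" "c \<in> V" "distinct [y, a, b, c]"
    "ea \<in> E" "ends ea = {y, a}" "eb \<in> E" "ends eb = {y, b}" "ec \<in> E" "ends ec = {y, c}"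
    "\<not> adjacent E ends a b" "\<not> adjacent E ends a c" "\<not> adjacent E ends b c"
  shows "claw_centre V E ends y"
  unfolding claw_centre_def using assms adjacentI[of ea E ends] adjacentI[of eb E ends]
    adjacentI[of ec E ends] by blast

lemma claw_centreE:
  assumes "claw_centre V E ends y"
  obtains a b c where "y \<in> V" "distinct [y, a, b, c]"
    "adjacent E ends y a" "adjacent E ends y b" "adjacent E ends y c"
    "\<not> adjacent E ends a b" "\<not> adjacent E ends a c" "\<not> adjacent E ends b c"
  using assms unfolding claw_centre_def by (elim exE conjE) (rule that)

lemma on_short_cycleI:
  assumes "e1 \<in> E" "ends e1 = {y, r}" "e2 \<in> E" "ends e2 = {y, s}" "e1 \<noteq> e2"
    "r = s \<or> adjacent E ends r s"
  shows "on_short_cycle E ends y"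
  unfolding on_short_cycle_def using assms by (intro exI[of _ e1] exI[of _ e2] exI[of _ r] exI[of _ s]) simp

lemma on_short_cycleE:
  assumes "on_short_cycle E ends y"
  obtains e1 e2 r s where "e1 \<in> E" "ends e1 = {y, r}" "e2 \<in> E" "ends e2 = {y, s}" "e1 \<noteq> e2"
    "r = s \<or> adjacent E ends r s"
  using assms unfolding on_short_cycle_def by (elim exE conjE) (rule that)

lemma on_short_cycle_map:
  assumes y: "on_short_cycle E ends y"
    and edge: "\<And>e. e \<in> E \<Longrightarrow> y \<in> ends e \<Longrightarrow> \<phi> e \<in> E' \<and> ends' (\<phi> e) = \<pi> ` ends e"
    and inj: "\<And>e1 e2. e1 \<in> E \<Longrightarrow> y \<in> ends e1 \<Longrightarrow> e2 \<in> E \<Longrightarrow> y \<in> ends e2 \<Longrightarrow>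
      \<phi> e1 = \<phi> e2 \<Longrightarrow> e1 = e2"
    and fix_y: "\<pi> y = y"
    and adj: "\<And>e r s. e \<in> E \<Longrightarrow> ends e = {r, s} \<Longrightarrow> \<pi> r = \<pi> s \<or> adjacent E' ends' (\<pi> r) (\<pi> s)"
  shows "on_short_cycle E' ends' y"
proof -
  obtain e1 e2 r s where e1: "e1 \<in> E" "ends e1 = {y, r}" and e2: "e2 \<in> E" "ends e2 = {y, s}"
    and ne: "e1 \<noteq> e2" and rs: "r = s \<or> adjacent E ends r s"
    using y by (rule on_short_cycleE)
  have "\<phi> e1 \<in> E'" "ends' (\<phi> e1) = {y, \<pi> r}" using edge[of e1] e1 fix_y by auto
  moreover have "\<phi> e2 \<in> E'" "ends' (\<phi> e2) = {y, \<pi> s}" using edge[of e2] e2 fix_y by auto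
  moreover have "\<phi> e1 \<noteq> \<phi> e2" using inj[of e1 e2] e1 e2 ne by auto
  moreover have "\<pi> r = \<pi> s \<or> adjacent E' ends' (\<pi> r) (\<pi> s)"
    using rs adj by (metis adjacentE)
  ultimately show ?thesis by (rule on_short_cycleI)
qed

lemma on_short_cycle_delete:
  assumes y: "on_short_cycle E ends y" and "y \<notin> S"
    and avoid: "\<And>e1 e2 r s. e1 \<in> E \<Longrightarrow> e2 \<in> E \<Longrightarrow> e1 \<noteq> e2 \<Longrightarrow> ends e1 = {y, r} \<Longrightarrow>
        ends e2 = {y, s} \<Longrightarrow> r = s \<or> adjacent E ends r s \<Longrightarrow> r \<notin> S \<and> s \<notin> S"
    and keep: "\<And>e. e \<in> E \<Longrightarrow> ends e \<inter> S = {} \<Longrightarrow> e \<in> E' \<and> ends' e = ends e"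
  shows "on_short_cycle E' ends' y"
proof -
  obtain e1 e2 r s where e1: "e1 \<in> E" "ends e1 = {y, r}" and e2: "e2 \<in> E" "ends e2 = {y, s}"
    and ne: "e1 \<noteq> e2" and rs: "r = s \<or> adjacent E ends r s"
    using y by (rule on_short_cycleE)
  have rs_S: "r \<notin> S" "s \<notin> S" using avoid[OF e1(1) e2(1) ne e1(2) e2(2) rs] by auto
  have "e1 \<in> E'" "ends' e1 = {y, r}" using keep[of e1] e1 \<open>y \<notin> S\<close> rs_S by auto
  moreover have "e2 \<in> E'" "ends' e2 = {y, s}" using keep[of e2] e2 \<open>y \<notin> S\<close> rs_S by auto
  moreover have "r = s \<or> adjacent E' ends' r s"
  proof (cases "r = s")
    case False
    then obtain e where "e \<in> E" "ends e = {r, s}" using rs by (auto elim: adjacentE)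
    thus ?thesis using keep[of e] rs_S adjacentI[of e E' ends' r s] by auto
  qed simp
  ultimately show ?thesis using ne by (intro on_short_cycleI)
qed

lemma k_edge_colorable_2_iff: "k_edge_colorable 2 ends F \<longleftrightarrow> (\<exists>col. proper_2_coloring ends F col)"
  unfolding k_edge_colorable_def proper_2_coloring_def by blast

lemma proper_2_coloringI:
  assumes "\<And>e. e \<in> F \<Longrightarrow> col e < 2"
    "\<And>x e1 e2. e1 \<in> F \<Longrightarrow> e2 \<in> F \<Longrightarrow> e1 \<noteq> e2 \<Longrightarrow> x \<in> ends e1 \<Longrightarrow> x \<in> ends e2 \<Longrightarrow>
      col e1 \<noteq> col e2"
  shows "proper_2_coloring ends F col"
  unfolding proper_2_coloring_def using assms by blast

lemma proper_2_coloring_less: "proper_2_coloring ends F col \<Longrightarrow> e \<in> F \<Longrightarrow> col e < 2"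
  unfolding proper_2_coloring_def by blast

lemma proper_2_coloring_neq:
  "proper_2_coloring ends F col \<Longrightarrow> e1 \<in> F \<Longrightarrow> e2 \<in> F \<Longrightarrow> e1 \<noteq> e2 \<Longrightarrow>
    x \<in> ends e1 \<Longrightarrow> x \<in> ends e2 \<Longrightarrow> col e1 \<noteq> col e2"
  unfolding proper_2_coloring_def by blast

lemma proper_2_coloring_neq_via_map:
  assumes col': "proper_2_coloring ends' F' col'"
    and e: "e1 \<in> F" "e2 \<in> F" "x \<in> ends e1" "x \<in> ends e2"
    and map: "\<And>e. e \<in> F \<Longrightarrow> x \<in> ends e \<Longrightarrow> \<phi> e \<in> F' \<and> x \<in> ends' (\<phi> e) \<and> col' (\<phi> e) = col e"
    and "\<phi> e1 \<noteq> \<phi> e2"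
  shows "col e1 \<noteq> col e2"
  using proper_2_coloring_neq[OF col', of "\<phi> e1" "\<phi> e2" x] map[of e1] map[of e2] e \<open>\<phi> e1 \<noteq> \<phi> e2\<close>
  by auto

lemma proper_2_coloring_add_path:
  assumes col0: "proper_2_coloring ends F0 col0"
    and d: "x1 \<noteq> m" "m \<noteq> x2" "x1 \<noteq> x2"
    and f1: "ends f1 = {x1, m}" and f2: "ends f2 = {m, x2}"
    and "f1 \<notin> F0" "f2 \<notin> F0"
    and at1: "\<And>e. e \<in> F0 \<Longrightarrow> x1 \<in> ends e \<Longrightarrow> e = g1"
    and at2: "\<And>e. e \<in> F0 \<Longrightarrow> x2 \<in> ends e \<Longrightarrow> e = g2"
    and atm: "\<And>e. e \<in> F0 \<Longrightarrow> m \<notin> ends e"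
    and g12: "g1 \<in> F0 \<Longrightarrow> g2 \<in> F0 \<Longrightarrow> col0 g1 \<noteq> col0 g2"
  shows "\<exists>col. proper_2_coloring ends (F0 \<union> {f1, f2}) col"
proof -
  define \<kappa> where "\<kappa> = (if g1 \<in> F0 then 1 - col0 g1 else if g2 \<in> F0 then col0 g2 else 0)"
  define col where "col = col0(f1 := \<kappa>, f2 := 1 - \<kappa>)"
  have f12: "f1 \<noteq> f2" using f1 f2 d by (auto simp: doubleton_eq_iff)
  have \<kappa>: "\<kappa> < 2" unfolding \<kappa>_def using proper_2_coloring_less[OF col0] by auto
  have col_f: "col f1 = \<kappa>" "col f2 = 1 - \<kappa>" using f12 unfolding col_def by auto
  have col_F0: "\<And>e. e \<in> F0 \<Longrightarrow> col e = col0 e" using \<open>f1 \<notin> F0\<close> \<open>f2 \<notin> F0\<close> unfolding col_def by auto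
  have g1: "g1 \<in> F0 \<Longrightarrow> col0 g1 \<noteq> \<kappa>"
    unfolding \<kappa>_def using proper_2_coloring_less[OF col0] by (auto; arith)
  have g2: "g2 \<in> F0 \<Longrightarrow> col0 g2 \<noteq> 1 - \<kappa>"
    unfolding \<kappa>_def using proper_2_coloring_less[OF col0, of g1] proper_2_coloring_less[OF col0, of g2] g12
    by (auto; arith)
  have new_old: "col f \<noteq> col e"
    if f: "f \<in> {f1, f2}" and e: "e \<in> F0" and x: "x \<in> ends f" "x \<in> ends e" for f e x
  proof -
    have "x \<noteq> m" using atm e x by auto
    then consider "f = f1" "x = x1" | "f = f2" "x = x2" using f x f1 f2 by auto
    thus ?thesis
    proof cases
      case 1
      hence "e = g1" using at1[OF e] x by simp
      thus ?thesis using 1 e g1 col_f col_F0 by simp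
    next
      case 2
      hence "e = g2" using at2[OF e] x by simp
      thus ?thesis using 2 e g2 col_f col_F0 by simp
    qed
  qed
  have "proper_2_coloring ends (F0 \<union> {f1, f2}) col"
  proof (rule proper_2_coloringI)
    fix e assume "e \<in> F0 \<union> {f1, f2}"
    thus "col e < 2" using proper_2_coloring_less[OF col0] \<kappa> col_f col_F0 by auto
  next
    fix x e1 e2 assume e: "e1 \<in> F0 \<union> {f1, f2}" "e2 \<in> F0 \<union> {f1, f2}" "e1 \<noteq> e2"
      "x \<in> ends e1" "x \<in> ends e2"
    consider "e1 \<in> F0" "e2 \<in> F0" | "e1 \<in> {f1, f2}" "e2 \<in> {f1, f2}"
      | "e1 \<in> {f1, f2}" "e2 \<in> F0" | "e1 \<in> F0" "e2 \<in> {f1, f2}"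
      using e(1,2) by blast
    thus "col e1 \<noteq> col e2"
    proof cases
      case 1
      thus ?thesis using proper_2_coloring_neq[OF col0 _ _ e(3-5)] col_F0 by simp
    next
      case 2
      hence "e1 = f1 \<and> e2 = f2 \<or> e1 = f2 \<and> e2 = f1" using e(3) by blast
      moreover have "\<kappa> \<noteq> 1 - \<kappa>" using \<kappa> by arith
      ultimately show ?thesis using col_f by (elim disjE) simp_all
    next
      case 3
      thus ?thesis using new_old e(4,5) by blast
    next
      case 4
      thus ?thesis using new_old[of e2 e1 x] e(4,5) by simp
    qed
  qed
  thus ?thesis by blast
qed

lemma finite_colorable_sizes:
  assumes "finite E"
  shows "finite {card F | F. F \<subseteq> E \<and> k_edge_colorable k ends F}"
proof (rule finite_subset)
  show "{card F | F. F \<subseteq> E \<and> k_edge_colorable k ends F} \<subseteq> {..card E}"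
  proof
    fix n assume "n \<in> {card F | F. F \<subseteq> E \<and> k_edge_colorable k ends F}"
    then obtain F where "n = card F" "F \<subseteq> E" by blast
    thus "n \<in> {..card E}" using card_mono[OF assms] by simp
  qed
qed simp

lemma card_le_nu:
  assumes "finite E" "F \<subseteq> E" "k_edge_colorable k ends F"
  shows "card F \<le> nu k E ends"
  unfolding nu_def
proof (rule Max_ge[OF finite_colorable_sizes[OF assms(1)]])
  show "card F \<in> {card F | F. F \<subseteq> E \<and> k_edge_colorable k ends F}" using assms by blast
qed

lemma nu_attained:
  assumes "finite E"
  obtains F where "F \<subseteq> E" "k_edge_colorable k ends F" "card F = nu k E ends"
proof -
  have "card {} \<in> {card F | F. F \<subseteq> E \<and> k_edge_colorable k ends F}"
    by (intro CollectI exI[of _ "{}"]) (simp add: k_edge_colorable_def)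
  hence "{card F | F. F \<subseteq> E \<and> k_edge_colorable k ends F} \<noteq> {}" by blast
  hence "nu k E ends \<in> {card F | F. F \<subseteq> E \<and> k_edge_colorable k ends F}"
    unfolding nu_def by (rule Max_in[OF finite_colorable_sizes[OF assms]])
  thus ?thesis using that by auto
qed

lemma nu_2_add_le:
  assumes "finite E" "finite E'"
    and extend: "\<And>F' col'. F' \<subseteq> E' \<Longrightarrow> proper_2_coloring ends' F' col' \<Longrightarrow>
        \<exists>F col. F \<subseteq> E \<and> proper_2_coloring ends F col \<and> card F' + g \<le> card F"
  shows "nu 2 E' ends' + g \<le> nu 2 E ends"
proof -
  obtain F' where F': "F' \<subseteq> E'" "k_edge_colorable 2 ends' F'" "card F' = nu 2 E' ends'"
    using nu_attained[OF \<open>finite E'\<close>] .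
  obtain col' where "proper_2_coloring ends' F' col'"
    using F'(2) unfolding k_edge_colorable_2_iff by (elim exE)
  hence "\<exists>F col. F \<subseteq> E \<and> proper_2_coloring ends F col \<and> card F' + g \<le> card F"
    by (rule extend[OF F'(1)])
  then obtain F col where F: "F \<subseteq> E" "proper_2_coloring ends F col" "card F' + g \<le> card F"
    by (elim exE conjE)
  have "k_edge_colorable 2 ends F" unfolding k_edge_colorable_2_iff using F(2) by blast
  hence "card F \<le> nu 2 E ends" by (rule card_le_nu[OF \<open>finite E\<close> F(1)])
  thus ?thesis using F(3) F'(3) by simp
qed

lemma incident_edge_cases:
  assumes "incident E ends x = {e1, e2, e3}"
    and "ends e1 = {x, t1}" "ends e2 = {x, t2}" "ends e3 = {x, t3}"
    and "x \<noteq> t1" "x \<noteq> t2" "x \<noteq> t3"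
    and "e \<in> E" "ends e = {x, s}"
  shows "(e = e1 \<and> s = t1) \<or> (e = e2 \<and> s = t2) \<or> (e = e3 \<and> s = t3)"
proof -
  have "e \<in> {e1, e2, e3}" using assms(1,8,9) unfolding incident_def by blast
  thus ?thesis using assms(2-7,9) by (auto simp: doubleton_eq_iff)
qed

lemma not_adjacent_if_not_neighbour:
  assumes "incident E ends x = {e1, e2, e3}"
    and "ends e1 = {x, t1}" "ends e2 = {x, t2}" "ends e3 = {x, t3}"
    and "x \<noteq> t1" "x \<noteq> t2" "x \<noteq> t3" and "s \<notin> {t1, t2, t3}"
  shows "\<not> adjacent E ends x s"
proof
  assume "adjacent E ends x s"
  then obtain e where "e \<in> E" "ends e = {x, s}" by (rule adjacentE)
  thus False using incident_edge_cases[OF assms(1-7)] assms(8) by blast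
qed

lemma mem_incident_eqD: "e \<in> E \<Longrightarrow> x \<in> ends e \<Longrightarrow> incident E ends x = A \<Longrightarrow> e \<in> A"
  unfolding incident_def by blast

lemma claw_count_mono:
  assumes "V' \<subseteq> V" "finite V" "\<And>y. y \<in> V' \<Longrightarrow> claw_centre V' E' ends' y \<Longrightarrow> claw_centre V E ends y"
  shows "claw_count V' E' ends' \<le> claw_count V E ends"
  unfolding claw_count_def using assms by (intro card_mono) auto

locale cubic_multigraph =
  fixes V :: "'v set" and E :: "'e set" and ends :: "'e \<Rightarrow> 'v set"
  assumes multigraph: "multigraph V E ends" and cubic: "cubic V E ends"
begin

lemma finite_V: "finite V" and finite_E: "finite E"
  using multigraph unfolding multigraph_def by auto

lemma ends_in_V: "e \<in> E \<Longrightarrow> x \<in> ends e \<Longrightarrow> x \<in> V"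
  using multigraph unfolding multigraph_def by auto

lemma ends_neq: "e \<in> E \<Longrightarrow> ends e = {y, r} \<Longrightarrow> r \<noteq> y"
  using multigraph unfolding multigraph_def by fastforce

lemma other_end:
  assumes "e \<in> E" "v \<in> ends e"
  obtains w where "ends e = {v, w}" "w \<noteq> v" "w \<in> V"
proof -
  have "ends e \<subseteq> V" "card (ends e) = 2" using multigraph assms unfolding multigraph_def by auto
  then obtain x y where "x \<noteq> y" "ends e = {x, y}" by (auto simp: card_2_iff)
  thus ?thesis using that assms \<open>ends e \<subseteq> V\<close> by (auto simp: insert_commute)
qed

lemma card_incident: "v \<in> V \<Longrightarrow> card (incident E ends v) = 3"
  using cubic unfolding cubic_def degree_def incident_def by auto

lemma obtain_incident:
  assumes "v \<in> V"
  obtains e1 e2 e3 where "distinct [e1, e2, e3]" "incident E ends v = {e1, e2, e3}"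
  using card_incident[OF assms] by (auto simp: card_3_iff)

lemma incident_eqI:
  assumes "v \<in> V" "distinct [e1, e2, e3]" "{e1, e2, e3} \<subseteq> incident E ends v"
  shows "incident E ends v = {e1, e2, e3}"
proof (rule card_subset_eq[symmetric])
  show "finite (incident E ends v)" using finite_E unfolding incident_def by simp
  show "card {e1, e2, e3} = card (incident E ends v)" using assms(1,2) card_incident by simp
qed (rule assms(3))

lemma incident_eq:
  assumes "v \<in> V" "e1 \<in> E" "e2 \<in> E" "e3 \<in> E"
    "ends e1 = {v, t1}" "ends e2 = {v, t2}" "ends e3 = {v, t3}" "distinct [e1, e2, e3]"
  shows "incident E ends v = {e1, e2, e3}"
  using assms by (intro incident_eqI) (auto simp: incident_def)

lemma obtain_third_incident:
  assumes "v \<in> V" "e1 \<in> E" "e2 \<in> E" "v \<in> ends e1" "v \<in> ends e2" "e1 \<noteq> e2"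
  obtains e3 where "e3 \<in> E" "v \<in> ends e3" "distinct [e1, e2, e3]"
    "incident E ends v = {e1, e2, e3}"
proof -
  obtain f1 f2 f3 where d: "distinct [f1, f2, f3]" and I: "incident E ends v = {f1, f2, f3}"
    using obtain_incident[OF assms(1)] .
  have "e1 \<in> {f1, f2, f3}" "e2 \<in> {f1, f2, f3}" using I assms unfolding incident_def by auto
  hence "\<exists>e3. e3 \<in> {f1, f2, f3} \<and> distinct [e1, e2, e3] \<and> {f1, f2, f3} = {e1, e2, e3}"
    using d assms(6) by auto
  then obtain e3 where "e3 \<in> {f1, f2, f3}" "distinct [e1, e2, e3]" "{f1, f2, f3} = {e1, e2, e3}"
    by blast
  thus ?thesis using that I unfolding incident_def by auto
qed

lemma obtain_two_more_incident:
  assumes "v \<in> V" "e1 \<in> E" "v \<in> ends e1"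
  obtains e2 e3 where "distinct [e1, e2, e3]" "incident E ends v = {e1, e2, e3}"
    "e2 \<in> E" "e3 \<in> E" "v \<in> ends e2" "v \<in> ends e3"
proof -
  obtain f1 f2 f3 where d: "distinct [f1, f2, f3]" and I: "incident E ends v = {f1, f2, f3}"
    using obtain_incident[OF assms(1)] .
  have "e1 = f1 \<or> e1 = f2 \<or> e1 = f3" using I assms unfolding incident_def by auto
  hence "\<exists>e2 e3. distinct [e1, e2, e3] \<and> {f1, f2, f3} = {e1, e2, e3}"
  proof (elim disjE)
    assume "e1 = f1" thus ?thesis using d by (intro exI[of _ f2] exI[of _ f3]) auto
  next
    assume "e1 = f2" thus ?thesis using d by (intro exI[of _ f1] exI[of _ f3]) auto
  next
    assume "e1 = f3" thus ?thesis using d by (intro exI[of _ f1] exI[of _ f2]) auto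
  qed
  then obtain e2 e3 where "distinct [e1, e2, e3]" "{f1, f2, f3} = {e1, e2, e3}" by blast
  thus ?thesis using that I unfolding incident_def by auto
qed

lemma not_claw_centre_if_on_short_cycle:
  assumes "on_short_cycle E ends y"
  shows "\<not> claw_centre V E ends y"
proof
  assume "claw_centre V E ends y"
  then obtain a b c where yV: "y \<in> V" and d: "distinct [y, a, b, c]"
    and adj: "adjacent E ends y a" "adjacent E ends y b" "adjacent E ends y c"
    and nonadj: "\<not> adjacent E ends a b" "\<not> adjacent E ends a c" "\<not> adjacent E ends b c"
    by (rule claw_centreE)
  obtain ea where ea: "ea \<in> E" "ends ea = {y, a}" using adj(1) by (rule adjacentE)
  obtain eb where eb: "eb \<in> E" "ends eb = {y, b}" using adj(2) by (rule adjacentE)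
  obtain ec where ec: "ec \<in> E" "ends ec = {y, c}" using adj(3) by (rule adjacentE)
  have "distinct [ea, eb, ec]" using ea eb ec d by (auto simp: doubleton_eq_iff)
  hence I: "incident E ends y = {ea, eb, ec}" by (rule incident_eq[OF yV ea(1) eb(1) ec(1) ea(2) eb(2) ec(2)])
  obtain e1 e2 r s where e1: "e1 \<in> E" "ends e1 = {y, r}" and e2: "e2 \<in> E" "ends e2 = {y, s}"
    and "e1 \<noteq> e2" and rs: "r = s \<or> adjacent E ends r s"
    using assms by (rule on_short_cycleE)
  have "y \<noteq> a" "y \<noteq> b" "y \<noteq> c" using d by auto
  hence "(e1 = ea \<and> r = a) \<or> (e1 = eb \<and> r = b) \<or> (e1 = ec \<and> r = c)"
    "(e2 = ea \<and> s = a) \<or> (e2 = eb \<and> s = b) \<or> (e2 = ec \<and> s = c)"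
    using incident_edge_cases[OF I ea(2) eb(2) ec(2)] e1 e2 by blast+
  thus False using rs \<open>e1 \<noteq> e2\<close> d nonadj adjacent_commute by (metis distinct_length_2_or_more)
qed

lemma on_short_cycle_if_not_claw_centre:
  assumes yV: "y \<in> V" and "\<not> claw_centre V E ends y"
  shows "on_short_cycle E ends y"
proof (rule ccontr)
  assume no_cycle: "\<not> on_short_cycle E ends y"
  obtain e1 e2 e3 where d: "distinct [e1, e2, e3]" and I: "incident E ends y = {e1, e2, e3}"
    using obtain_incident[OF yV] .
  have E: "e1 \<in> E" "e2 \<in> E" "e3 \<in> E" "y \<in> ends e1" "y \<in> ends e2" "y \<in> ends e3"
    using I by (auto simp: incident_def)
  obtain r1 r2 r3 where r: "ends e1 = {y, r1}" "ends e2 = {y, r2}" "ends e3 = {y, r3}"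
    "r1 \<in> V" "r2 \<in> V" "r3 \<in> V" "r1 \<noteq> y" "r2 \<noteq> y" "r3 \<noteq> y"
    using other_end[OF E(1,4)] other_end[OF E(2,5)] other_end[OF E(3,6)] by metis
  have far: "r \<noteq> s \<and> \<not> adjacent E ends r s"
    if "f1 \<in> E" "f2 \<in> E" "f1 \<noteq> f2" "ends f1 = {y, r}" "ends f2 = {y, s}" for f1 f2 r s
    using no_cycle on_short_cycleI[OF that(1,4,2,5,3)] by blast
  have "r1 \<noteq> r2 \<and> \<not> adjacent E ends r1 r2" "r1 \<noteq> r3 \<and> \<not> adjacent E ends r1 r3"
    "r2 \<noteq> r3 \<and> \<not> adjacent E ends r2 r3"
    using far[OF E(1,2) _ r(1,2)] far[OF E(1,3) _ r(1,3)] far[OF E(2,3) _ r(2,3)] d by auto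
  hence "claw_centre V E ends y"
    using yV r E by (intro claw_centreI[of y V r1 r2 r3 e1 E ends e2 e3]) simp_all
  thus False using assms(2) by simp
qed

lemma on_short_cycle_far_end:
  assumes "e1 \<in> E" "e2 \<in> E" "e1 \<noteq> e2" "ends e1 = {y, r}" "ends e2 = {y, s}"
    and "r = s \<or> adjacent E ends r s" and "s \<noteq> y"
  shows "on_short_cycle E ends r"
proof (cases "r = s")
  case True
  thus ?thesis using assms(1-5) by (intro on_short_cycleI[of e1 E ends r y e2 y]) (auto simp: insert_commute)
next
  case False
  then obtain e where e: "e \<in> E" "ends e = {r, s}" using assms(6) by (auto elim: adjacentE)
  have "r \<noteq> y" using ends_neq[OF assms(1,4)] .
  hence "e1 \<noteq> e" using e(2) assms(4,7) by (auto simp: doubleton_eq_iff)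
  moreover have "adjacent E ends y s" using adjacentI[of e2 E ends y s] assms(2,5) by blast
  ultimately show ?thesis using assms(1,4) e by (intro on_short_cycleI[of e1 E ends r y e s]) (auto simp: insert_commute)
qed

lemma short_cycle_avoids_claw_centres:
  assumes "e1 \<in> E" "e2 \<in> E" "e1 \<noteq> e2" "ends e1 = {y, r}" "ends e2 = {y, s}"
    and "r = s \<or> adjacent E ends r s"
  shows "\<not> claw_centre V E ends r" "\<not> claw_centre V E ends s"
proof -
  have "r \<noteq> y" "s \<noteq> y" using ends_neq assms(1,2,4,5) by auto
  have "s = r \<or> adjacent E ends s r" using assms(6) adjacent_commute by metis
  show "\<not> claw_centre V E ends r" "\<not> claw_centre V E ends s"
    using on_short_cycle_far_end[OF assms(1-6) \<open>s \<noteq> y\<close>]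
      on_short_cycle_far_end[OF assms(2,1) assms(3)[symmetric] assms(5,4) \<open>s = r \<or> _\<close> \<open>r \<noteq> y\<close>]
      not_claw_centre_if_on_short_cycle by blast+
qed

lemma short_cycle_cases:
  assumes I: "incident E ends y = {e1, e2, e3}"
    and ends: "ends e1 = {y, t1}" "ends e2 = {y, t2}" "ends e3 = {y, t3}"
    and "on_short_cycle E ends y"
  shows "(t1 = t2 \<or> adjacent E ends t1 t2) \<or> (t1 = t3 \<or> adjacent E ends t1 t3) \<or>
    (t2 = t3 \<or> adjacent E ends t2 t3)"
proof -
  obtain f1 f2 r s where f: "f1 \<in> E" "ends f1 = {y, r}" "f2 \<in> E" "ends f2 = {y, s}" "f1 \<noteq> f2"
    "r = s \<or> adjacent E ends r s"
    using assms(5) by (rule on_short_cycleE)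
  have "e1 \<in> E" "e2 \<in> E" "e3 \<in> E" using I unfolding incident_def by auto
  hence "y \<noteq> t1" "y \<noteq> t2" "y \<noteq> t3" using ends_neq ends by metis+
  hence "(f1 = e1 \<and> r = t1) \<or> (f1 = e2 \<and> r = t2) \<or> (f1 = e3 \<and> r = t3)"
    "(f2 = e1 \<and> s = t1) \<or> (f2 = e2 \<and> s = t2) \<or> (f2 = e3 \<and> s = t3)"
    using incident_edge_cases[OF I ends] f by auto
  thus ?thesis using f(5,6) adjacent_commute[of E ends] by auto
qed

lemma no_short_cycle_cases:
  assumes I: "incident E ends y = {e1, e2, e3}" and "distinct [e1, e2, e3]"
    and ends: "ends e1 = {y, t1}" "ends e2 = {y, t2}" "ends e3 = {y, t3}"
    and "\<not> on_short_cycle E ends y"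
  shows "t1 \<noteq> t2" "\<not> adjacent E ends t1 t2" "t1 \<noteq> t3" "\<not> adjacent E ends t1 t3"
    "t2 \<noteq> t3" "\<not> adjacent E ends t2 t3"
proof -
  have E: "e1 \<in> E" "e2 \<in> E" "e3 \<in> E" using I unfolding incident_def by auto
  show "t1 \<noteq> t2" "\<not> adjacent E ends t1 t2" "t1 \<noteq> t3" "\<not> adjacent E ends t1 t3"
    "t2 \<noteq> t3" "\<not> adjacent E ends t2 t3"
    using on_short_cycleI[OF E(1) ends(1) E(2) ends(2)] on_short_cycleI[OF E(1) ends(1) E(3) ends(3)]
      on_short_cycleI[OF E(2) ends(2) E(3) ends(3)] assms(2,6) by auto
qed

end

definition reducible :: "'v set \<Rightarrow> 'e set \<Rightarrow> ('e \<Rightarrow> 'v set) \<Rightarrow> bool" where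
  "reducible V E ends \<longleftrightarrow> (\<exists>(V'::'v set) (E'::'e set) ends'. cubic_multigraph V' E' ends' \<and>
     card V' < card V \<and>
     (5 * card V' \<le> 6 * nu 2 E' ends' + 2 * claw_count V' E' ends' \<longrightarrow>
      5 * card V \<le> 6 * nu 2 E ends + 2 * claw_count V E ends))"

lemma reducibleI:
  fixes V V' :: "'v set" and E E' :: "'e set"
  assumes "cubic_multigraph V' E' ends'" "card V' + k = card V" "0 < k"
    "claw_count V' E' ends' + cA \<le> claw_count V E ends + cB" "nu 2 E' ends' + g \<le> nu 2 E ends"
    "5 * k + 2 * cB \<le> 6 * g + 2 * cA"
  shows "reducible V E ends"
  unfolding reducible_def
proof (intro exI[of _ V'] exI[of _ E'] exI[of _ ends'] conjI impI)
  show "cubic_multigraph V' E' ends'" by fact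
  show "card V' < card V" using assms by simp
  assume "5 * card V' \<le> 6 * nu 2 E' ends' + 2 * claw_count V' E' ends'"
  thus "5 * card V \<le> 6 * nu 2 E ends + 2 * claw_count V E ends" using assms by linarith
qed

lemma card_insert_Diff_swap:
  assumes "finite A" "a \<in> A" "b \<notin> A"
  shows "card (insert b (A - {a})) = card A"
proof -
  have "card A > 0" using assms card_gt_0_iff by auto
  thus ?thesis using assms by (simp add: card_Diff_singleton)
qed

lemma card_Diff_add_card: "finite V \<Longrightarrow> S \<subseteq> V \<Longrightarrow> card (V - S) + card S = card V"
  by (metis card_Diff_subset card_mono finite_subset le_add_diff_inverse2)

lemma card_add_le_if_subset_Diff:
  assumes "A \<subseteq> B - X" "X \<subseteq> B" "finite B"
  shows "card A + card X \<le> card B"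
proof -
  have "card A \<le> card (B - X)" using assms by (intro card_mono) auto
  also have "card (B - X) = card B - card X" using assms by (meson card_Diff_subset finite_subset)
  finally show ?thesis using card_mono[OF assms(3,2)] by linarith
qed

subsection \<open>Deleting a component\<close>

locale component_deletion = cubic_multigraph +
  fixes S :: "'v set" and N :: "'e set" and colN :: "'e \<Rightarrow> nat"
  assumes S_subset: "S \<subseteq> V"
    and S_closed: "\<And>e. e \<in> E \<Longrightarrow> ends e \<inter> S \<noteq> {} \<Longrightarrow> ends e \<subseteq> S"
    and N_subset: "N \<subseteq> E" and N_inside: "\<And>e. e \<in> N \<Longrightarrow> ends e \<subseteq> S"
    and N_coloring: "proper_2_coloring ends N colN"
begin

definition V' :: "'v set" where "V' = V - S"
definition E' :: "'e set" where "E' = {e\<in>E. ends e \<inter> S = {}}"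

lemma reduced_cubic_multigraph: "cubic_multigraph V' E' ends"
proof
  show "multigraph V' E' ends" using multigraph unfolding multigraph_def V'_def E'_def by auto
  have "\<And>y. y \<in> V' \<Longrightarrow> {e\<in>E'. y \<in> ends e} = {e\<in>E. y \<in> ends e}"
    using S_closed unfolding V'_def E'_def by blast
  thus "cubic V' E' ends" using cubic unfolding cubic_def degree_def V'_def by auto
qed

lemma card_V': "card V' + card S = card V"
  unfolding V'_def using S_subset finite_V by (rule card_Diff_add_card[rotated])

lemma claw_count_reduced: "claw_count V' E' ends \<le> claw_count V E ends"
proof (rule claw_count_mono)
  show "V' \<subseteq> V" unfolding V'_def by auto
  fix y assume y: "y \<in> V'" and claw: "claw_centre V' E' ends y"
  show "claw_centre V E ends y"
  proof (rule ccontr)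
    assume "\<not> claw_centre V E ends y"
    hence cycle: "on_short_cycle E ends y"
      using y on_short_cycle_if_not_claw_centre unfolding V'_def by auto
    have "y \<notin> S" using y unfolding V'_def by auto
    have "on_short_cycle E' ends y"
    proof (rule on_short_cycle_delete[OF cycle \<open>y \<notin> S\<close>])
      fix e1 e2 r s assume "e1 \<in> E" "e2 \<in> E" "ends e1 = {y, r}" "ends e2 = {y, s}"
      thus "r \<notin> S \<and> s \<notin> S" using S_closed[of e1] S_closed[of e2] \<open>y \<notin> S\<close> by auto
    qed (simp add: E'_def)
    thus False
      using cubic_multigraph.not_claw_centre_if_on_short_cycle[OF reduced_cubic_multigraph] claw
      by blast
  qed
qed (rule finite_V)

lemma nu_reduced: "nu 2 E' ends + card N \<le> nu 2 E ends"
proof (rule nu_2_add_le[OF finite_E])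
  show "finite E'" using finite_E unfolding E'_def by auto
  fix F' col' assume F': "F' \<subseteq> E'" and col': "proper_2_coloring ends F' col'"
  have outside: "ends e \<inter> S = {}" if "e \<in> F'" for e using F' that unfolding E'_def by auto
  have disjoint: "F' \<inter> N = {}"
  proof -
    have "ends e \<noteq> {}" if "e \<in> N" for e
      using that N_subset multigraph unfolding multigraph_def by fastforce
    thus ?thesis using outside N_inside by blast
  qed
  define col where "col = (\<lambda>e. if e \<in> N then colN e else col' e)"
  have "finite F'" "finite N" using F' N_subset finite_E unfolding E'_def by (auto intro: finite_subset)
  hence "card (F' \<union> N) = card F' + card N" using disjoint by (rule card_Un_disjoint)
  moreover have "F' \<union> N \<subseteq> E" using F' N_subset unfolding E'_def by auto
  moreover have "proper_2_coloring ends (F' \<union> N) col"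
  proof (rule proper_2_coloringI)
    fix e assume "e \<in> F' \<union> N"
    thus "col e < 2" using col' N_coloring unfolding col_def proper_2_coloring_def by auto
  next
    fix x e1 e2 assume e: "e1 \<in> F' \<union> N" "e2 \<in> F' \<union> N" "e1 \<noteq> e2" "x \<in> ends e1" "x \<in> ends e2"
    have "\<not> (e1 \<in> F' \<and> e2 \<in> N)" "\<not> (e1 \<in> N \<and> e2 \<in> F')"
      using e(4,5) outside N_inside by blast+
    hence "e1 \<in> F' \<and> e2 \<in> F' \<and> e1 \<notin> N \<and> e2 \<notin> N \<or> e1 \<in> N \<and> e2 \<in> N"
      using e(1,2) disjoint by blast
    thus "col e1 \<noteq> col e2"
      using proper_2_coloring_neq[OF col' _ _ e(3-5)] proper_2_coloring_neq[OF N_coloring _ _ e(3-5)]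
      unfolding col_def by auto
  qed
  ultimately show "\<exists>F col. F \<subseteq> E \<and> proper_2_coloring ends F col \<and> card F' + card N \<le> card F"
    by (intro exI[of _ "F' \<union> N"] exI[of _ col]) simp
qed

lemma reducible:
  assumes "S \<noteq> {}" and "5 * card S \<le> 6 * card N"
  shows "reducible V E ends"
proof (rule reducibleI[where cA = 0 and cB = 0, OF reduced_cubic_multigraph card_V' _ _ nu_reduced])
  show "0 < card S" using assms(1) S_subset finite_V by (meson card_gt_0_iff finite_subset)
qed (use claw_count_reduced assms(2) in auto)

end

subsection \<open>Digons\<close>

text \<open>Parallel edges \<open>p, q\<close> between \<open>u\<close> and \<open>v\<close>, whose third edges \<open>eu, ev\<close> lead to distinct
  vertices \<open>u', v'\<close>: delete \<open>u, v\<close> and let \<open>eu\<close> join \<open>u'\<close> to \<open>v'\<close>.\<close>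
locale digon = cubic_multigraph +
  fixes u v u' v' :: 'v and p q eu ev :: 'e
  assumes uv: "u \<noteq> v" and pq: "p \<noteq> q" and in_E: "p \<in> E" "q \<in> E" "eu \<in> E" "ev \<in> E"
    and ends_p: "ends p = {u, v}" and ends_q: "ends q = {u, v}"
    and ends_eu: "ends eu = {u, u'}" and ends_ev: "ends ev = {v, v'}"
    and u': "u' \<noteq> u" "u' \<noteq> v" and v': "v' \<noteq> u" "v' \<noteq> v" and u'v': "u' \<noteq> v'"
begin

definition V' :: "'v set" where "V' = V - {u, v}"
definition E' :: "'e set" where "E' = E - {p, q, ev}"
definition ends' :: "'e \<Rightarrow> 'v set" where "ends' = ends(eu := {u', v'})"

lemma in_V: "u \<in> V" "v \<in> V" "u' \<in> V" "v' \<in> V"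
  using ends_in_V in_E ends_p ends_eu ends_ev by auto

lemma distinct_edges: "distinct [p, q, eu]" "distinct [p, q, ev]" "eu \<noteq> ev"
  using pq ends_p ends_q ends_eu ends_ev u' v' uv by (auto simp: doubleton_eq_iff)

lemma incident_u: "incident E ends u = {p, q, eu}"
  by (rule incident_eqI[OF in_V(1) distinct_edges(1)])
    (use in_E ends_p ends_q ends_eu in \<open>simp add: incident_def\<close>)

lemma incident_v: "incident E ends v = {p, q, ev}"
  by (rule incident_eqI[OF in_V(2) distinct_edges(2)])
    (use in_E ends_p ends_q ends_ev in \<open>simp add: incident_def\<close>)

lemma not_at_u: "e \<in> E \<Longrightarrow> e \<notin> {p, q, eu} \<Longrightarrow> u \<notin> ends e"
  using incident_u mem_incident_eqD by fastforce

lemma not_at_v: "e \<in> E \<Longrightarrow> e \<notin> {p, q, ev} \<Longrightarrow> v \<notin> ends e"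
  using incident_v mem_incident_eqD by fastforce

lemma reduced_multigraph: "multigraph V' E' ends'"
  unfolding multigraph_def
proof (intro conjI)
  show "finite V'" "finite E'" using finite_V finite_E unfolding V'_def E'_def by auto
  show "\<forall>e\<in>E'. ends' e \<subseteq> V' \<and> card (ends' e) = 2"
  proof
    fix e assume e: "e \<in> E'"
    show "ends' e \<subseteq> V' \<and> card (ends' e) = 2"
    proof (cases "e = eu")
      case True thus ?thesis using in_V u' v' u'v' unfolding ends'_def V'_def by auto
    next
      case False
      hence "u \<notin> ends e" "v \<notin> ends e" using not_at_u not_at_v e unfolding E'_def by auto
      thus ?thesis using multigraph e False unfolding multigraph_def ends'_def V'_def E'_def by auto
    qed
  qed
qed

lemma reduced_cubic: "cubic V' E' ends'"
  unfolding cubic_def degree_def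
proof
  fix y assume y: "y \<in> V'"
  have deg: "card {e\<in>E. y \<in> ends e} = 3" using cubic y unfolding cubic_def degree_def V'_def by auto
  show "card {e\<in>E'. y \<in> ends' e} = 3"
  proof (cases "y = v'")
    case True
    have "{e\<in>E'. v' \<in> ends' e} = insert eu ({e\<in>E. v' \<in> ends e} - {ev})"
    proof -
      have "e \<in> E' \<and> v' \<in> ends' e \<longleftrightarrow> e \<in> insert eu ({e\<in>E. v' \<in> ends e} - {ev})" for e
        using in_E ends_ev ends_eu u' v' u'v' distinct_edges unfolding E'_def ends'_def
        by (cases "e = eu"; cases "e = p"; cases "e = q"; auto simp: ends_p ends_q)
      thus ?thesis by blast
    qed
    moreover have "finite {e\<in>E. v' \<in> ends e}" using finite_E by auto
    moreover have "ev \<in> {e\<in>E. v' \<in> ends e}" using in_E ends_ev by auto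
    moreover have "eu \<notin> {e\<in>E. v' \<in> ends e}" using ends_eu v' u'v' by auto
    ultimately show ?thesis using True deg card_insert_Diff_swap by metis
  next
    case False
    have "y \<noteq> u" "y \<noteq> v" using y unfolding V'_def by auto
    hence "e \<in> E' \<and> y \<in> ends' e \<longleftrightarrow> e \<in> E \<and> y \<in> ends e" for e
      using in_E ends_ev ends_eu False distinct_edges unfolding E'_def ends'_def
      by (cases "e = eu"; cases "e = p"; cases "e = q"; cases "e = ev"; auto simp: ends_p ends_q)
    thus ?thesis using deg by simp
  qed
qed

lemma reduced_cubic_multigraph: "cubic_multigraph V' E' ends'"
  using reduced_multigraph reduced_cubic by unfold_locales

lemma card_V': "card V' + 2 = card V"
  unfolding V'_def using card_Diff_add_card[OF finite_V, of "{u, v}"] in_V uv by simp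

text \<open>The map fixing \<open>y\<close> that identifies \<open>u\<close> with \<open>v'\<close> and \<open>v\<close> with \<open>u'\<close> sends every edge of
  the original graph to an edge of the reduced graph or to a single vertex.\<close>
lemma on_short_cycle_reduced:
  assumes y: "y \<in> V'" and cycle: "on_short_cycle E ends y"
  shows "on_short_cycle E' ends' y"
proof -
  have y_uv: "y \<noteq> u" "y \<noteq> v" using y unfolding V'_def by auto
  define \<pi> where "\<pi> = (\<lambda>x. if x = u then v' else if x = v then u' else x)"
  define \<phi> where "\<phi> = (\<lambda>e. if e = ev then eu else e)"
  have \<pi>: "\<pi> u = v'" "\<pi> v = u'" "\<pi> u' = u'" "\<pi> v' = v'" unfolding \<pi>_def using uv u' v' by auto
  have eu_E': "eu \<in> E'" using in_E distinct_edges unfolding E'_def by auto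
  have adj_eu: "adjacent E' ends' u' v'" "adjacent E' ends' v' u'"
    using eu_E' adjacentI[of eu E' ends' u' v'] adjacentI[of eu E' ends' v' u'] unfolding ends'_def
    by (auto simp: insert_commute)
  have other: "e \<in> E' \<and> ends' e = ends e \<and> \<pi> ` ends e = ends e"
    if "e \<in> E" "e \<notin> {p, q, eu, ev}" for e
  proof -
    have "u \<notin> ends e" "v \<notin> ends e" using that not_at_u not_at_v by auto
    thus ?thesis using that unfolding E'_def ends'_def \<pi>_def by auto
  qed
  show ?thesis
  proof (rule on_short_cycle_map[OF cycle, where \<phi> = \<phi> and \<pi> = \<pi>])
    fix e assume e: "e \<in> E" "y \<in> ends e"
    have "e \<noteq> p" "e \<noteq> q" using e y_uv ends_p ends_q by auto
    moreover have "e = ev \<Longrightarrow> \<phi> e \<in> E' \<and> ends' (\<phi> e) = \<pi> ` ends e"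
      using eu_E' by (simp add: \<phi>_def ends'_def \<pi> ends_ev distinct_edges(3))
    moreover have "e = eu \<Longrightarrow> \<phi> e \<in> E' \<and> ends' (\<phi> e) = \<pi> ` ends e"
      using eu_E' by (simp add: \<phi>_def ends'_def \<pi> ends_eu distinct_edges(3) insert_commute)
    moreover have "e \<notin> {p, q, eu, ev} \<Longrightarrow> \<phi> e \<in> E' \<and> ends' (\<phi> e) = \<pi> ` ends e"
      using other[OF e(1)] unfolding \<phi>_def by auto
    ultimately show "\<phi> e \<in> E' \<and> ends' (\<phi> e) = \<pi> ` ends e" by blast
  next
    fix e1 e2 assume "e1 \<in> E" "y \<in> ends e1" "e2 \<in> E" "y \<in> ends e2" "\<phi> e1 = \<phi> e2"
    thus "e1 = e2" using ends_eu ends_ev y_uv u' v' u'v' unfolding \<phi>_def by (auto split: if_splits)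
  next
    show "\<pi> y = y" using y_uv unfolding \<pi>_def by auto
  next
    fix e r s assume e: "e \<in> E" "ends e = {r, s}"
    show "\<pi> r = \<pi> s \<or> adjacent E' ends' (\<pi> r) (\<pi> s)"
    proof (cases "e \<in> {p, q, eu, ev}")
      case True
      hence "e = p \<or> e = q \<or> e = eu \<or> e = ev" by simp
      hence "{r, s} = {u, v} \<or> {r, s} = {u, u'} \<or> {r, s} = {v, v'}"
        using e(2) ends_p ends_q ends_eu ends_ev by metis
      hence "(r = u \<and> s = v) \<or> (r = v \<and> s = u) \<or> (r = u \<and> s = u') \<or> (r = u' \<and> s = u)
          \<or> (r = v \<and> s = v') \<or> (r = v' \<and> s = v)" by (simp add: doubleton_eq_iff)
      thus ?thesis by (elim disjE) (simp_all add: \<pi> adj_eu)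
    next
      case False
      have "u \<notin> ends e" "v \<notin> ends e" using not_at_u not_at_v e(1) False by auto
      hence "e \<in> E'" "ends' e = {r, s}" "\<pi> r = r" "\<pi> s = s"
        using other[OF e(1)] False e(2) unfolding \<pi>_def by auto
      thus ?thesis using adjacentI[of e E' ends' r s] by auto
    qed
  qed
qed

lemma claw_count_reduced: "claw_count V' E' ends' \<le> claw_count V E ends"
proof (rule claw_count_mono)
  show "V' \<subseteq> V" unfolding V'_def by auto
  fix y assume y: "y \<in> V'" and claw: "claw_centre V' E' ends' y"
  have yV: "y \<in> V" using y unfolding V'_def by auto
  show "claw_centre V E ends y"
  proof (rule ccontr)
    assume "\<not> claw_centre V E ends y"
    hence "on_short_cycle E' ends' y"
      using on_short_cycle_if_not_claw_centre[OF yV] on_short_cycle_reduced[OF y] by blast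
    thus False
      using cubic_multigraph.not_claw_centre_if_on_short_cycle[OF reduced_cubic_multigraph] claw
      by blast
  qed
qed (rule finite_V)

lemma reduced_edges: "E' \<subseteq> E" "p \<notin> E'" "q \<notin> E'" "ev \<notin> E'"
  unfolding E'_def by auto

lemma reduced_edge_avoids_uv: "e \<in> E' \<Longrightarrow> e \<noteq> eu \<Longrightarrow> x \<in> ends e \<Longrightarrow> x \<noteq> u \<and> x \<noteq> v"
  using not_at_u not_at_v reduced_edges by blast

text \<open>If \<open>eu\<close> is colored, \<open>p\<close> and \<open>ev\<close> complete the path \<open>u' u v v'\<close> alternately.\<close>
lemma extend_2_coloring_with_eu:
  assumes F': "F' \<subseteq> E'" and col': "proper_2_coloring ends' F' col'" and "eu \<in> F'"
  shows "proper_2_coloring ends (F' \<union> {p, ev}) (col'(p := 1 - col' eu, ev := col' eu))"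
    (is "proper_2_coloring ends ?F ?col")
proof (rule proper_2_coloringI)
  define \<alpha> where "\<alpha> = col' eu"
  have \<alpha>: "\<alpha> < 2" using proper_2_coloring_less[OF col' \<open>eu \<in> F'\<close>] unfolding \<alpha>_def .
  have not_in: "p \<notin> F'" "q \<notin> F'" "ev \<notin> F'" using F' reduced_edges by auto
  fix x e1 e2 assume e: "e1 \<in> ?F" "e2 \<in> ?F" "e1 \<noteq> e2" "x \<in> ends e1" "x \<in> ends e2"
  show "?col e1 \<noteq> ?col e2"
  proof (cases "x = u \<or> x = v")
    case True
    have "q \<notin> ?F" using not_in pq distinct_edges by auto
    hence "e1 \<in> {p, eu, ev}" "e2 \<in> {p, eu, ev}"
      using True e F' reduced_edge_avoids_uv by (auto simp: ends_p ends_ev)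
    moreover have "x = u \<Longrightarrow> ev \<notin> {e1, e2}" using e ends_ev v' uv by auto
    moreover have "x = v \<Longrightarrow> eu \<notin> {e1, e2}" using e ends_eu u' uv by auto
    moreover have "?col p = 1 - \<alpha>" "?col ev = \<alpha>" "?col eu = \<alpha>"
      unfolding \<alpha>_def using distinct_edges by auto
    moreover have "1 - \<alpha> \<noteq> \<alpha>" using \<alpha> by arith
    ultimately show ?thesis using True e(3) by auto
  next
    case False
    define \<phi> where "\<phi> = (\<lambda>e. if e = ev then eu else e)"
    show ?thesis
    proof (rule proper_2_coloring_neq_via_map[OF col' e(1,2,4,5), where \<phi> = \<phi>])
      fix e assume e: "e \<in> ?F" "x \<in> ends e"
      have "e \<noteq> p" using e False ends_p by auto
      moreover have "e = ev \<Longrightarrow> \<phi> e \<in> F' \<and> x \<in> ends' (\<phi> e) \<and> col' (\<phi> e) = ?col e"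
        using \<open>eu \<in> F'\<close> e False ends_ev distinct_edges unfolding \<phi>_def ends'_def by auto
      moreover have "e = eu \<Longrightarrow> \<phi> e \<in> F' \<and> x \<in> ends' (\<phi> e) \<and> col' (\<phi> e) = ?col e"
        using \<open>eu \<in> F'\<close> e False ends_eu distinct_edges unfolding \<phi>_def ends'_def by auto
      moreover have "e \<noteq> eu \<Longrightarrow> e \<noteq> ev \<Longrightarrow> e \<noteq> p \<Longrightarrow>
          \<phi> e \<in> F' \<and> x \<in> ends' (\<phi> e) \<and> col' (\<phi> e) = ?col e"
        using e not_in distinct_edges unfolding \<phi>_def ends'_def by auto
      ultimately show "\<phi> e \<in> F' \<and> x \<in> ends' (\<phi> e) \<and> col' (\<phi> e) = ?col e" by blast
    next
      show "\<phi> e1 \<noteq> \<phi> e2" using e False ends_eu ends_ev u' v' u'v' unfolding \<phi>_def by auto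
    qed
  qed
qed (use proper_2_coloring_less[OF col'] \<open>eu \<in> F'\<close> in auto)

lemma extend_2_coloring_without_eu:
  assumes F': "F' \<subseteq> E'" and col': "proper_2_coloring ends' F' col'" and "eu \<notin> F'"
  shows "proper_2_coloring ends (F' \<union> {p, q}) (col'(p := 0, q := 1))"
    (is "proper_2_coloring ends ?F ?col")
proof (rule proper_2_coloringI)
  have not_in: "p \<notin> F'" "q \<notin> F'" using F' reduced_edges by auto
  fix x e1 e2 assume e: "e1 \<in> ?F" "e2 \<in> ?F" "e1 \<noteq> e2" "x \<in> ends e1" "x \<in> ends e2"
  show "?col e1 \<noteq> ?col e2"
  proof (cases "x = u \<or> x = v")
    case True
    have "e1 \<in> {p, q}" "e2 \<in> {p, q}"
      using True e F' reduced_edge_avoids_uv \<open>eu \<notin> F'\<close> by auto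
    thus ?thesis using e(3) pq by auto
  next
    case False
    show ?thesis
    proof (rule proper_2_coloring_neq_via_map[OF col' e(1,2,4,5), where \<phi> = id])
      fix e assume e: "e \<in> ?F" "x \<in> ends e"
      show "id e \<in> F' \<and> x \<in> ends' (id e) \<and> col' (id e) = ?col e"
        using e False not_in \<open>eu \<notin> F'\<close> ends_p ends_q unfolding ends'_def by auto
    qed (use e in simp)
  qed
qed (use proper_2_coloring_less[OF col'] in auto)

lemma nu_reduced: "nu 2 E' ends' + 2 \<le> nu 2 E ends"
proof (rule nu_2_add_le[OF finite_E])
  show "finite E'" using finite_E unfolding E'_def by auto
  fix F' col' assume F': "F' \<subseteq> E'" and col': "proper_2_coloring ends' F' col'"
  have "finite F'" using F' reduced_edges finite_E by (auto intro: finite_subset)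
  have not_in: "p \<notin> F'" "q \<notin> F'" "ev \<notin> F'" using F' reduced_edges by auto
  show "\<exists>F col. F \<subseteq> E \<and> proper_2_coloring ends F col \<and> card F' + 2 \<le> card F"
  proof (cases "eu \<in> F'")
    case True
    have "card (F' \<union> {p, ev}) = card F' + 2"
      using \<open>finite F'\<close> not_in distinct_edges by (simp add: card_insert_if)
    moreover have "F' \<union> {p, ev} \<subseteq> E" using F' reduced_edges in_E by auto
    ultimately show ?thesis using extend_2_coloring_with_eu[OF F' col' True]
      by (intro exI[of _ "F' \<union> {p, ev}"] exI[of _ "col'(p := 1 - col' eu, ev := col' eu)"]) simp
  next
    case False
    have "card (F' \<union> {p, q}) = card F' + 2"
      using \<open>finite F'\<close> not_in pq by (simp add: card_insert_if)
    moreover have "F' \<union> {p, q} \<subseteq> E" using F' reduced_edges in_E by auto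
    ultimately show ?thesis using extend_2_coloring_without_eu[OF F' col' False]
      by (intro exI[of _ "F' \<union> {p, q}"] exI[of _ "col'(p := 0, q := 1)"]) simp
  qed
qed

lemma reducible: "reducible V E ends"
  by (rule reducibleI[where cA = 0 and cB = 0, OF reduced_cubic_multigraph card_V' _ _ nu_reduced])
    (use claw_count_reduced in simp_all)

end

subsection \<open>Triangles\<close>

text \<open>A triangle \<open>abc\<close> whose vertices have three distinct further neighbours \<open>a', b', c'\<close>
  is contracted to the vertex \<open>c\<close>.\<close>
locale triangle = cubic_multigraph +
  fixes a b c a' b' c' :: 'v and eab ebc eca ea eb ec :: 'e
  assumes abc: "a \<noteq> b" "b \<noteq> c" "a \<noteq> c"
    and in_E: "eab \<in> E" "ebc \<in> E" "eca \<in> E" "ea \<in> E" "eb \<in> E" "ec \<in> E"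
    and ends_tri: "ends eab = {a, b}" "ends ebc = {b, c}" "ends eca = {c, a}"
    and ends_out: "ends ea = {a, a'}" "ends eb = {b, b'}" "ends ec = {c, c'}"
    and a': "a' \<noteq> a" "a' \<noteq> b" "a' \<noteq> c" and b': "b' \<noteq> a" "b' \<noteq> b" "b' \<noteq> c"
    and c': "c' \<noteq> a" "c' \<noteq> b" "c' \<noteq> c"
begin

definition V' :: "'v set" where "V' = V - {a, b}"
definition E' :: "'e set" where "E' = E - {eab, ebc, eca}"
definition ends' :: "'e \<Rightarrow> 'v set" where "ends' = ends(ea := {c, a'}, eb := {c, b'})"

lemma in_V: "a \<in> V" "b \<in> V" "c \<in> V" "a' \<in> V" "b' \<in> V"
  using ends_in_V in_E ends_tri ends_out by auto

lemma distinct_edges: "distinct [eab, ebc, eca, ea, eb, ec]"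
  using ends_tri ends_out abc a' b' c' by (auto simp: doubleton_eq_iff)

lemma incident_a: "incident E ends a = {eab, eca, ea}"
  by (rule incident_eqI[OF in_V(1)]) (use in_E ends_tri ends_out distinct_edges in \<open>simp_all add: incident_def\<close>)

lemma incident_b: "incident E ends b = {eab, ebc, eb}"
  by (rule incident_eqI[OF in_V(2)]) (use in_E ends_tri ends_out distinct_edges in \<open>simp_all add: incident_def\<close>)

lemma incident_c: "incident E ends c = {ebc, eca, ec}"
  by (rule incident_eqI[OF in_V(3)]) (use in_E ends_tri ends_out distinct_edges in \<open>simp_all add: incident_def\<close>)

lemma not_at_a: "e \<in> E \<Longrightarrow> e \<notin> {eab, eca, ea} \<Longrightarrow> a \<notin> ends e"
  using incident_a mem_incident_eqD by fastforce

lemma not_at_b: "e \<in> E \<Longrightarrow> e \<notin> {eab, ebc, eb} \<Longrightarrow> b \<notin> ends e"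
  using incident_b mem_incident_eqD by fastforce

lemma not_at_c: "e \<in> E \<Longrightarrow> e \<notin> {ebc, eca, ec} \<Longrightarrow> c \<notin> ends e"
  using incident_c mem_incident_eqD by fastforce

lemma ends'_simps: "ends' ea = {c, a'}" "ends' eb = {c, b'}" "e \<noteq> ea \<Longrightarrow> e \<noteq> eb \<Longrightarrow> ends' e = ends e"
  unfolding ends'_def using distinct_edges by auto

lemma mem_E': "e \<in> E' \<longleftrightarrow> e \<in> E \<and> e \<noteq> eab \<and> e \<noteq> ebc \<and> e \<noteq> eca"
  unfolding E'_def by auto

lemma reduced_multigraph: "multigraph V' E' ends'"
  unfolding multigraph_def
proof (intro conjI)
  show "finite V'" "finite E'" using finite_V finite_E unfolding V'_def E'_def by auto
  show "\<forall>e\<in>E'. ends' e \<subseteq> V' \<and> card (ends' e) = 2"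
  proof
    fix e assume e: "e \<in> E'"
    show "ends' e \<subseteq> V' \<and> card (ends' e) = 2"
    proof (cases "e = ea \<or> e = eb")
      case True
      hence "ends' e = {c, a'} \<or> ends' e = {c, b'}" using ends'_simps by auto
      moreover have "{c, a'} \<subseteq> V'" "{c, b'} \<subseteq> V'" using in_V a' b' abc unfolding V'_def by auto
      moreover have "card {c, a'} = 2" "card {c, b'} = 2" using a' b' by auto
      ultimately show ?thesis by auto
    next
      case False
      have "e \<in> E" "e \<noteq> eab" "e \<noteq> ebc" "e \<noteq> eca" using e mem_E' by auto
      hence "a \<notin> ends e" "b \<notin> ends e" using not_at_a not_at_b False by auto
      moreover have "ends' e = ends e" using ends'_simps False by auto
      moreover have "ends e \<subseteq> V" "card (ends e) = 2" using multigraph \<open>e \<in> E\<close> unfolding multigraph_def by auto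
      ultimately show ?thesis unfolding V'_def by auto
    qed
  qed
qed

lemma reduced_incident_c: "{e\<in>E'. c \<in> ends' e} = {ea, eb, ec}"
proof -
  have "e \<in> E' \<and> c \<in> ends' e \<longleftrightarrow> e \<in> {ea, eb, ec}" for e
  proof (cases "e = ea \<or> e = eb")
    case True thus ?thesis using ends'_simps mem_E' in_E distinct_edges by auto
  next
    case False
    hence "ends' e = ends e" using ends'_simps by auto
    moreover have "e \<in> E \<and> c \<in> ends e \<longleftrightarrow> e \<in> {ebc, eca, ec}" using incident_c unfolding incident_def by blast
    ultimately show ?thesis using False mem_E' distinct_edges by auto
  qed
  thus ?thesis by blast
qed

lemma reduced_cubic: "cubic V' E' ends'"
  unfolding cubic_def degree_def
proof
  fix y assume y: "y \<in> V'"
  have deg: "card {e\<in>E. y \<in> ends e} = 3" using cubic y unfolding cubic_def degree_def V'_def by auto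
  show "card {e\<in>E'. y \<in> ends' e} = 3"
  proof (cases "y = c")
    case True thus ?thesis using reduced_incident_c distinct_edges by simp
  next
    case False
    have y_ab: "y \<noteq> a" "y \<noteq> b" using y unfolding V'_def by auto
    have "e \<in> E' \<and> y \<in> ends' e \<longleftrightarrow> e \<in> E \<and> y \<in> ends e" for e
    proof (cases "e = ea \<or> e = eb")
      case True thus ?thesis using ends'_simps mem_E' in_E distinct_edges ends_out y_ab False by auto
    next
      case False
      hence "ends' e = ends e" using ends'_simps by auto
      thus ?thesis using mem_E' ends_tri y_ab \<open>y \<noteq> c\<close> by auto
    qed
    thus ?thesis using deg by simp
  qed
qed

lemma reduced_cubic_multigraph: "cubic_multigraph V' E' ends'"
  using reduced_multigraph reduced_cubic by unfold_locales

lemma card_V': "card V' + 2 = card V"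
  unfolding V'_def using card_Diff_add_card[OF finite_V, of "{a, b}"] in_V abc by simp

lemma on_short_cycle_reduced:
  assumes "y \<in> V'" "y \<noteq> c" "on_short_cycle E ends y"
  shows "on_short_cycle E' ends' y"
proof -
  define \<pi> where "\<pi> = (\<lambda>x. if x = a \<or> x = b then c else x)"
  have \<pi>: "\<pi> a = c" "\<pi> b = c" "\<pi> c = c" "\<pi> a' = a'" "\<pi> b' = b'" unfolding \<pi>_def using a' b' abc by auto
  have y_ab: "y \<noteq> a" "y \<noteq> b" using assms(1) unfolding V'_def by auto
  have adj_a': "adjacent E' ends' c a'" using adjacentI[of ea E' ends' c a'] ends'_simps mem_E' in_E distinct_edges by auto
  have adj_b': "adjacent E' ends' c b'" using adjacentI[of eb E' ends' c b'] ends'_simps mem_E' in_E distinct_edges by auto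
  show ?thesis
  proof (rule on_short_cycle_map[OF assms(3), where \<phi> = id and \<pi> = \<pi>])
    fix e assume e: "e \<in> E" "y \<in> ends e"
    have "e \<noteq> eab" "e \<noteq> ebc" "e \<noteq> eca" using e ends_tri y_ab assms(2) by auto
    hence "e \<in> E'" using mem_E' e by auto
    show "id e \<in> E' \<and> ends' (id e) = \<pi> ` ends e"
    proof (cases "e = ea \<or> e = eb")
      case True thus ?thesis using \<open>e \<in> E'\<close> ends'_simps ends_out \<pi> by auto
    next
      case False
      hence "a \<notin> ends e" "b \<notin> ends e"
        using not_at_a not_at_b e(1) \<open>e \<noteq> eab\<close> \<open>e \<noteq> ebc\<close> \<open>e \<noteq> eca\<close> by auto
      hence "\<pi> ` ends e = ends e" unfolding \<pi>_def by auto
      thus ?thesis using \<open>e \<in> E'\<close> ends'_simps False by auto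
    qed
  next
    show "\<pi> y = y" using y_ab unfolding \<pi>_def by auto
  next
    fix e r s assume e: "e \<in> E" "ends e = {r, s}"
    show "\<pi> r = \<pi> s \<or> adjacent E' ends' (\<pi> r) (\<pi> s)"
    proof (cases "e \<in> {eab, ebc, eca, ea, eb}")
      case True
      hence "e = eab \<or> e = ebc \<or> e = eca \<or> e = ea \<or> e = eb" by simp
      hence "{r, s} = {a, b} \<or> {r, s} = {b, c} \<or> {r, s} = {c, a} \<or> {r, s} = {a, a'} \<or> {r, s} = {b, b'}"
        using e(2) ends_tri ends_out by metis
      hence "(r = a \<and> s = b) \<or> (r = b \<and> s = a) \<or> (r = b \<and> s = c) \<or> (r = c \<and> s = b)
        \<or> (r = c \<and> s = a) \<or> (r = a \<and> s = c) \<or> (r = a \<and> s = a') \<or> (r = a' \<and> s = a)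
        \<or> (r = b \<and> s = b') \<or> (r = b' \<and> s = b)" by (simp add: doubleton_eq_iff)
      thus ?thesis using adj_a' adj_b' adjacent_commute[of E' ends'] by (elim disjE) (simp_all add: \<pi>)
    next
      case False
      hence "a \<notin> ends e" "b \<notin> ends e" using not_at_a not_at_b e(1) by auto
      hence "e \<in> E'" "ends' e = {r, s}" "\<pi> r = r" "\<pi> s = s" using False e mem_E' ends'_simps
        unfolding \<pi>_def by auto
      thus ?thesis using adjacentI[of e E' ends' r s] by auto
    qed
  qed simp
qed

lemma claw_count_reduced: "claw_count V' E' ends' \<le> claw_count V E ends + 1"
proof -
  have "{y\<in>V'. claw_centre V' E' ends' y} \<subseteq> insert c {y\<in>V. claw_centre V E ends y}"
  proof
    fix y assume "y \<in> {y\<in>V'. claw_centre V' E' ends' y}"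
    hence y: "y \<in> V'" and claw: "claw_centre V' E' ends' y" by auto
    have "claw_centre V E ends y" if "y \<noteq> c"
    proof (rule ccontr)
      assume "\<not> claw_centre V E ends y"
      hence "on_short_cycle E ends y" using y on_short_cycle_if_not_claw_centre unfolding V'_def by auto
      hence "on_short_cycle E' ends' y" using on_short_cycle_reduced y that by blast
      thus False
        using cubic_multigraph.not_claw_centre_if_on_short_cycle[OF reduced_cubic_multigraph] claw
        by blast
    qed
    thus "y \<in> insert c {y\<in>V. claw_centre V E ends y}" using y unfolding V'_def by auto
  qed
  hence "claw_count V' E' ends' \<le> card (insert c {y\<in>V. claw_centre V E ends y})"
    unfolding claw_count_def using finite_V by (intro card_mono) auto
  also have "\<dots> \<le> claw_count V E ends + 1"
    unfolding claw_count_def using finite_V by (simp add: card_insert_if)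
  finally show ?thesis .
qed

lemma reduced_edge_at_corner:
  assumes "F' \<subseteq> E'"
  shows "e \<in> F' \<Longrightarrow> a \<in> ends e \<Longrightarrow> e = ea" "e \<in> F' \<Longrightarrow> b \<in> ends e \<Longrightarrow> e = eb"
    "e \<in> F' \<Longrightarrow> c \<in> ends e \<Longrightarrow> e = ec"
  using not_at_a not_at_b not_at_c assms mem_E' by blast+

text \<open>Away from the triangle the two graphs agree, and each triangle vertex meets at most one edge
  of \<open>F'\<close>, so a coloring of the reduced graph is also one of the original graph.\<close>
lemma reduced_2_coloring_original:
  assumes F': "F' \<subseteq> E'" and col': "proper_2_coloring ends' F' col'"
  shows "proper_2_coloring ends F' col'"
proof (rule proper_2_coloringI)
  fix x e1 e2 assume e: "e1 \<in> F'" "e2 \<in> F'" "e1 \<noteq> e2" "x \<in> ends e1" "x \<in> ends e2"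
  have reduced_ends: "x \<in> ends' e" if "e \<in> F'" "x \<in> ends e" "x \<noteq> a" "x \<noteq> b" for e
    using that ends'_simps ends_out by (cases "e = ea"; cases "e = eb") auto
  show "col' e1 \<noteq> col' e2"
  proof (cases "x = a \<or> x = b \<or> x = c")
    case True thus ?thesis using reduced_edge_at_corner[OF F'] e by metis
  next
    case False thus ?thesis using proper_2_coloring_neq[OF col' e(1,2,3)] reduced_ends e by blast
  qed
qed (use proper_2_coloring_less[OF col'] in auto)

lemma reduced_2_coloring_at_c:
  assumes F': "F' \<subseteq> E'" and col': "proper_2_coloring ends' F' col'"
  shows "ea \<in> F' \<Longrightarrow> eb \<in> F' \<Longrightarrow> col' ea \<noteq> col' eb"
    "ea \<in> F' \<Longrightarrow> ec \<in> F' \<Longrightarrow> col' ea \<noteq> col' ec"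
    "eb \<in> F' \<Longrightarrow> ec \<in> F' \<Longrightarrow> col' eb \<noteq> col' ec"
    "ea \<notin> F' \<or> eb \<notin> F' \<or> ec \<notin> F'"
proof -
  show ab: "ea \<in> F' \<Longrightarrow> eb \<in> F' \<Longrightarrow> col' ea \<noteq> col' eb"
    using proper_2_coloring_neq[OF col', of ea eb c] ends'_simps distinct_edges by auto
  show ac: "ea \<in> F' \<Longrightarrow> ec \<in> F' \<Longrightarrow> col' ea \<noteq> col' ec"
    using proper_2_coloring_neq[OF col', of ea ec c] ends'_simps ends_out distinct_edges by auto
  show bc: "eb \<in> F' \<Longrightarrow> ec \<in> F' \<Longrightarrow> col' eb \<noteq> col' ec"
    using proper_2_coloring_neq[OF col', of eb ec c] ends'_simps ends_out distinct_edges by auto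
  show "ea \<notin> F' \<or> eb \<notin> F' \<or> ec \<notin> F'"
  proof (rule ccontr)
    assume "\<not> (ea \<notin> F' \<or> eb \<notin> F' \<or> ec \<notin> F')"
    hence "ea \<in> F'" "eb \<in> F'" "ec \<in> F'" by auto
    thus False using ab ac bc proper_2_coloring_less[OF col', of ea] proper_2_coloring_less[OF col', of eb]
        proper_2_coloring_less[OF col', of ec] by arith
  qed
qed

text \<open>Some vertex of the triangle, say \<open>c\<close>, is not covered by \<open>F'\<close>; the path \<open>a c b\<close> is then
  added to \<open>F'\<close>.\<close>
lemma nu_reduced: "nu 2 E' ends' + 2 \<le> nu 2 E ends"
proof (rule nu_2_add_le[OF finite_E])
  show "finite E'" using finite_E unfolding E'_def by auto
  fix F' col' assume F': "F' \<subseteq> E'" and col': "proper_2_coloring ends' F' col'"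
  have "finite F'" using F' mem_E' finite_E by (auto intro: finite_subset)
  have not_in: "eab \<notin> F'" "ebc \<notin> F'" "eca \<notin> F'" using F' mem_E' by auto
  note col = reduced_2_coloring_original[OF F' col']
  note at = reduced_edge_at_corner[OF F']
  note at_c = reduced_2_coloring_at_c[OF F' col']
  have add: "\<exists>F col. F \<subseteq> E \<and> proper_2_coloring ends F col \<and> card F' + 2 \<le> card F"
    if "f1 \<in> {eab, ebc, eca}" "f2 \<in> {eab, ebc, eca}" "f1 \<noteq> f2"
      "\<exists>col. proper_2_coloring ends (F' \<union> {f1, f2}) col" for f1 f2
  proof -
    have "card (F' \<union> {f1, f2}) = card F' + 2"
      using that(1-3) not_in \<open>finite F'\<close> by (auto simp: card_insert_if)
    moreover have "F' \<union> {f1, f2} \<subseteq> E" using F' mem_E' that(1,2) in_E by auto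
    ultimately show ?thesis using that(4) by (intro exI[of _ "F' \<union> {f1, f2}"]) simp
  qed
  have ends_rot: "ends eca = {a, c}" "ends ebc = {c, b}" "ends eab = {b, a}"
    using ends_tri by (simp_all add: insert_commute)
  consider "ec \<notin> F'" | "ea \<notin> F'" | "eb \<notin> F'" using at_c(4) by blast
  thus "\<exists>F col. F \<subseteq> E \<and> proper_2_coloring ends F col \<and> card F' + 2 \<le> card F"
  proof cases
    case 1
    hence "\<And>e. e \<in> F' \<Longrightarrow> c \<notin> ends e" using at(3) by blast
    thus ?thesis using add[of eca ebc] distinct_edges proper_2_coloring_add_path[OF col abc(3)
        abc(2)[symmetric] abc(1) ends_rot(1,2) not_in(3,2) at(1,2) _ at_c(1)] by auto
  next
    case 2
    hence "\<And>e. e \<in> F' \<Longrightarrow> a \<notin> ends e" using at(1) by blast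
    thus ?thesis using add[of eab eca] distinct_edges proper_2_coloring_add_path[OF col
        abc(1)[symmetric] abc(3) abc(2) ends_rot(3,1) not_in(1,3) at(2,3) _ at_c(3)] by auto
  next
    case 3
    hence "\<And>e. e \<in> F' \<Longrightarrow> b \<notin> ends e" using at(2) by blast
    thus ?thesis using add[of eab ebc] distinct_edges proper_2_coloring_add_path[OF col
        abc ends_tri(1,2) not_in(1,2) at(1,3) _ at_c(2)] by auto
  qed
qed

lemma reducible: "reducible V E ends"
  by (rule reducibleI[where cA = 0 and cB = 1, OF reduced_cubic_multigraph card_V' _ _ nu_reduced])
    (use claw_count_reduced in simp_all)

end

subsection \<open>Adjacent claw centres\<close>

text \<open>Adjacent claw centres \<open>x\<close>, with leaves \<open>a, b, c\<close>, and \<open>a\<close>, with leaves \<open>x, a1, a2\<close>, are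
  deleted, and \<open>exb, exc\<close> are redirected to join \<open>b\<close> with \<open>a1\<close> and \<open>c\<close> with \<open>a2\<close>.\<close>
locale claw_pair = cubic_multigraph +
  fixes x a b c a1 a2 :: 'v and exa exb exc eaa1 eaa2 :: 'e
  assumes in_E: "exa \<in> E" "exb \<in> E" "exc \<in> E" "eaa1 \<in> E" "eaa2 \<in> E"
    and ends_x: "ends exa = {x, a}" "ends exb = {x, b}" "ends exc = {x, c}"
    and ends_a: "ends eaa1 = {a, a1}" "ends eaa2 = {a, a2}"
    and distinct_x: "distinct [x, a, b, c]" and distinct_a: "distinct [a, x, a1, a2]"
    and leaves_x: "\<not> adjacent E ends a b" "\<not> adjacent E ends a c" "\<not> adjacent E ends b c"
    and leaves_a: "\<not> adjacent E ends x a1" "\<not> adjacent E ends x a2" "\<not> adjacent E ends a1 a2"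
begin

definition V' :: "'v set" where "V' = V - {x, a}"
definition E' :: "'e set" where "E' = E - {exa, eaa1, eaa2}"
definition ends' :: "'e \<Rightarrow> 'v set" where "ends' = ends(exb := {b, a1}, exc := {c, a2})"

lemma in_V: "x \<in> V" "a \<in> V" "b \<in> V" "c \<in> V" "a1 \<in> V" "a2 \<in> V"
  using ends_in_V in_E ends_x ends_a by auto

lemma leaves_distinct: "b \<noteq> a1" "b \<noteq> a2" "c \<noteq> a1" "c \<noteq> a2"
  using leaves_x adjacentI[of eaa1 E ends a a1] adjacentI[of eaa2 E ends a a2] in_E ends_a by auto

lemma distinct_edges: "distinct [exa, exb, exc, eaa1, eaa2]"
  using ends_x ends_a distinct_x distinct_a leaves_distinct by (auto simp: doubleton_eq_iff)

lemma incident_x: "incident E ends x = {exa, exb, exc}"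
  by (rule incident_eqI[OF in_V(1)]) (use in_E ends_x distinct_edges in \<open>simp_all add: incident_def\<close>)

lemma incident_a: "incident E ends a = {exa, eaa1, eaa2}"
  by (rule incident_eqI[OF in_V(2)])
    (use in_E ends_x ends_a distinct_edges in \<open>simp_all add: incident_def\<close>)

lemma not_at_x: "e \<in> E \<Longrightarrow> e \<notin> {exa, exb, exc} \<Longrightarrow> x \<notin> ends e"
  using incident_x mem_incident_eqD by fastforce

lemma not_at_a: "e \<in> E \<Longrightarrow> e \<notin> {exa, eaa1, eaa2} \<Longrightarrow> a \<notin> ends e"
  using incident_a mem_incident_eqD by fastforce

lemma claw_centres: "claw_centre V E ends x" "claw_centre V E ends a"
proof -
  show "claw_centre V E ends x"
    by (rule claw_centreI[OF in_V(1-4) distinct_x in_E(1) ends_x(1) in_E(2) ends_x(2) in_E(3) ends_x(3)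
          leaves_x])
  have "ends exa = {a, x}" using ends_x by (simp add: insert_commute)
  thus "claw_centre V E ends a"
    by (rule claw_centreI[OF in_V(2,1,5,6) distinct_a in_E(1) _ in_E(4) ends_a(1) in_E(5) ends_a(2)
          leaves_a])
qed

lemma ends'_simps: "ends' exb = {b, a1}" "ends' exc = {c, a2}"
  "e \<noteq> exb \<Longrightarrow> e \<noteq> exc \<Longrightarrow> ends' e = ends e"
  unfolding ends'_def using distinct_edges by auto

lemma mem_E': "e \<in> E' \<longleftrightarrow> e \<in> E \<and> e \<noteq> exa \<and> e \<noteq> eaa1 \<and> e \<noteq> eaa2"
  unfolding E'_def by auto

lemma reduced_multigraph: "multigraph V' E' ends'"
  unfolding multigraph_def
proof (intro conjI)
  show "finite V'" "finite E'" using finite_V finite_E unfolding V'_def E'_def by auto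
  show "\<forall>e\<in>E'. ends' e \<subseteq> V' \<and> card (ends' e) = 2"
  proof
    fix e assume e: "e \<in> E'"
    show "ends' e \<subseteq> V' \<and> card (ends' e) = 2"
    proof (cases "e = exb \<or> e = exc")
      case True
      hence "ends' e = {b, a1} \<or> ends' e = {c, a2}" using ends'_simps by auto
      moreover have "{b, a1} \<subseteq> V'" "{c, a2} \<subseteq> V'"
        using in_V distinct_x distinct_a unfolding V'_def by auto
      moreover have "card {b, a1} = 2" "card {c, a2} = 2" using leaves_distinct by auto
      ultimately show ?thesis by auto
    next
      case False
      have "e \<in> E" "e \<noteq> exa" "e \<noteq> eaa1" "e \<noteq> eaa2" using e mem_E' by auto
      hence "x \<notin> ends e" "a \<notin> ends e" using not_at_x not_at_a False by auto
      moreover have "ends' e = ends e" using ends'_simps False by auto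
      moreover have "ends e \<subseteq> V" "card (ends e) = 2"
        using multigraph \<open>e \<in> E\<close> unfolding multigraph_def by auto
      ultimately show ?thesis unfolding V'_def by auto
    qed
  qed
qed

lemma reduced_incident:
  "{e\<in>E'. a1 \<in> ends' e} = insert exb ({e\<in>E. a1 \<in> ends e} - {eaa1})"
  "{e\<in>E'. a2 \<in> ends' e} = insert exc ({e\<in>E. a2 \<in> ends e} - {eaa2})"
  "y \<in> V' \<Longrightarrow> y \<noteq> a1 \<Longrightarrow> y \<noteq> a2 \<Longrightarrow> {e\<in>E'. y \<in> ends' e} = {e\<in>E. y \<in> ends e}"
proof -
  have "e \<in> E' \<and> a1 \<in> ends' e \<longleftrightarrow> e \<in> insert exb ({e\<in>E. a1 \<in> ends e} - {eaa1})" for e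
  proof (cases "e = exb \<or> e = exc \<or> e = exa \<or> e = eaa1 \<or> e = eaa2")
    case True thus ?thesis
      using ends'_simps mem_E' in_E distinct_edges ends_x ends_a distinct_x distinct_a leaves_distinct
      by auto
  qed (use ends'_simps mem_E' in auto)
  thus "{e\<in>E'. a1 \<in> ends' e} = insert exb ({e\<in>E. a1 \<in> ends e} - {eaa1})" by blast
  have "e \<in> E' \<and> a2 \<in> ends' e \<longleftrightarrow> e \<in> insert exc ({e\<in>E. a2 \<in> ends e} - {eaa2})" for e
  proof (cases "e = exb \<or> e = exc \<or> e = exa \<or> e = eaa1 \<or> e = eaa2")
    case True thus ?thesis
      using ends'_simps mem_E' in_E distinct_edges ends_x ends_a distinct_x distinct_a leaves_distinct
      by auto
  qed (use ends'_simps mem_E' in auto)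
  thus "{e\<in>E'. a2 \<in> ends' e} = insert exc ({e\<in>E. a2 \<in> ends e} - {eaa2})" by blast
  assume y: "y \<in> V'" "y \<noteq> a1" "y \<noteq> a2"
  have "y \<noteq> x" "y \<noteq> a" using y unfolding V'_def by auto
  have "e \<in> E' \<and> y \<in> ends' e \<longleftrightarrow> e \<in> E \<and> y \<in> ends e" for e
  proof (cases "e = exb \<or> e = exc \<or> e = exa \<or> e = eaa1 \<or> e = eaa2")
    case True thus ?thesis
      using ends'_simps mem_E' in_E distinct_edges ends_x ends_a \<open>y \<noteq> x\<close> \<open>y \<noteq> a\<close> y(2,3) by auto
  qed (use ends'_simps mem_E' in auto)
  thus "{e\<in>E'. y \<in> ends' e} = {e\<in>E. y \<in> ends e}" by blast
qed

lemma reduced_cubic: "cubic V' E' ends'"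
  unfolding cubic_def degree_def
proof
  fix y assume y: "y \<in> V'"
  have deg: "card {e\<in>E. y \<in> ends e} = 3" using cubic y unfolding cubic_def degree_def V'_def by auto
  have fin: "finite {e\<in>E. y \<in> ends e}" using finite_E by auto
  show "card {e\<in>E'. y \<in> ends' e} = 3"
  proof (cases "y = a1")
    case True
    have "eaa1 \<in> {e\<in>E. a1 \<in> ends e}" "exb \<notin> {e\<in>E. a1 \<in> ends e}"
      using in_E ends_a ends_x distinct_a leaves_distinct by auto
    thus ?thesis using True reduced_incident(1) deg card_insert_Diff_swap fin by metis
  next
    case not_a1: False
    show ?thesis
    proof (cases "y = a2")
      case True
      have "eaa2 \<in> {e\<in>E. a2 \<in> ends e}" "exc \<notin> {e\<in>E. a2 \<in> ends e}"
        using in_E ends_a ends_x distinct_a leaves_distinct by auto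
      thus ?thesis using True reduced_incident(2) deg card_insert_Diff_swap fin by metis
    next
      case False thus ?thesis using reduced_incident(3)[OF y not_a1] deg by simp
    qed
  qed
qed

lemma reduced_cubic_multigraph: "cubic_multigraph V' E' ends'"
  using reduced_multigraph reduced_cubic by unfold_locales

lemma card_V': "card V' + 2 = card V"
  unfolding V'_def using card_Diff_add_card[OF finite_V, of "{x, a}"] in_V distinct_x by simp

text \<open>Both deleted vertices were claw centres, and no claw centre lies on a short cycle, so
  every short cycle at a surviving vertex survives.\<close>
lemma claw_count_reduced: "claw_count V' E' ends' + 2 \<le> claw_count V E ends"
proof -
  have "{y\<in>V'. claw_centre V' E' ends' y} \<subseteq> {y\<in>V. claw_centre V E ends y} - {x, a}"
  proof
    fix y assume "y \<in> {y\<in>V'. claw_centre V' E' ends' y}"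
    hence y: "y \<in> V'" and claw: "claw_centre V' E' ends' y" by auto
    have "y \<notin> {x, a}" "y \<in> V" using y unfolding V'_def by auto
    have "claw_centre V E ends y"
    proof (rule ccontr)
      assume "\<not> claw_centre V E ends y"
      hence "on_short_cycle E ends y" using on_short_cycle_if_not_claw_centre \<open>y \<in> V\<close> by blast
      hence "on_short_cycle E' ends' y"
      proof (rule on_short_cycle_delete[OF _ \<open>y \<notin> {x, a}\<close>])
        fix e1 e2 r s assume "e1 \<in> E" "e2 \<in> E" "e1 \<noteq> e2" "ends e1 = {y, r}" "ends e2 = {y, s}"
          "r = s \<or> adjacent E ends r s"
        thus "r \<notin> {x, a} \<and> s \<notin> {x, a}"
          using short_cycle_avoids_claw_centres claw_centres by blast
      next
        fix e assume e: "e \<in> E" "ends e \<inter> {x, a} = {}"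
        hence "e \<noteq> exa" "e \<noteq> exb" "e \<noteq> exc" "e \<noteq> eaa1" "e \<noteq> eaa2" using ends_x ends_a by auto
        thus "e \<in> E' \<and> ends' e = ends e" using e mem_E' ends'_simps by auto
      qed
      thus False
        using cubic_multigraph.not_claw_centre_if_on_short_cycle[OF reduced_cubic_multigraph] claw
        by blast
    qed
    thus "y \<in> {y\<in>V. claw_centre V E ends y} - {x, a}" using \<open>y \<in> V\<close> \<open>y \<notin> {x, a}\<close> by auto
  qed
  moreover have "{x, a} \<subseteq> {y\<in>V. claw_centre V E ends y}" using claw_centres in_V by auto
  ultimately have "card {y\<in>V'. claw_centre V' E' ends' y} + card {x, a} \<le> claw_count V E ends"
    unfolding claw_count_def using finite_V by (intro card_add_le_if_subset_Diff) auto
  thus ?thesis unfolding claw_count_def using distinct_x by simp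
qed

text \<open>If \<open>exb\<close> (now \<open>b a1\<close>) is colored, restore it as \<open>x b\<close>, drop \<open>exc\<close> and color the path
  \<open>b x a a1\<close> alternately.\<close>
lemma extend_2_coloring_with_exb:
  assumes F': "F' \<subseteq> E'" and col': "proper_2_coloring ends' F' col'" and "exb \<in> F'"
  shows "proper_2_coloring ends (F' - {exc} \<union> {exa, eaa1}) (col'(exa := 1 - col' exb, eaa1 := col' exb))"
    (is "proper_2_coloring ends ?F ?col")
proof (rule proper_2_coloringI)
  define \<alpha> where "\<alpha> = col' exb"
  have \<alpha>: "\<alpha> < 2" using proper_2_coloring_less[OF col' \<open>exb \<in> F'\<close>] unfolding \<alpha>_def .
  have not_in: "exa \<notin> F'" "eaa1 \<notin> F'" "eaa2 \<notin> F'" using F' mem_E' by auto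
  have col: "?col exa = 1 - \<alpha>" "?col eaa1 = \<alpha>" "?col exb = \<alpha>" unfolding \<alpha>_def using distinct_edges by auto
  have "1 - \<alpha> \<noteq> \<alpha>" using \<alpha> by arith
  have FE: "?F \<subseteq> E" using F' mem_E' in_E by auto
  have at_x: "e = exa \<or> e = exb" if "e \<in> ?F" "x \<in> ends e" for e
    using incident_x FE that ends_a distinct_a unfolding incident_def by auto
  have at_a: "e = exa \<or> e = eaa1" if "e \<in> ?F" "a \<in> ends e" for e
    using incident_a FE that not_in unfolding incident_def by auto
  fix z e1 e2 assume e: "e1 \<in> ?F" "e2 \<in> ?F" "e1 \<noteq> e2" "z \<in> ends e1" "z \<in> ends e2"
  show "?col e1 \<noteq> ?col e2"
  proof (cases "z = x \<or> z = a")
    case True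
    hence "e1 \<in> {exa, exb} \<and> e2 \<in> {exa, exb} \<or> e1 \<in> {exa, eaa1} \<and> e2 \<in> {exa, eaa1}"
      using at_x at_a e by blast
    thus ?thesis using e(3) col \<open>1 - \<alpha> \<noteq> \<alpha>\<close> by auto
  next
    case False
    define \<phi> where "\<phi> = (\<lambda>e. if e = eaa1 then exb else e)"
    show ?thesis
    proof (rule proper_2_coloring_neq_via_map[OF col' e(1,2,4,5), where \<phi> = \<phi>])
      fix e assume h: "e \<in> ?F" "z \<in> ends e"
      show "\<phi> e \<in> F' \<and> z \<in> ends' (\<phi> e) \<and> col' (\<phi> e) = ?col e"
      proof (cases "e = eaa1")
        case True
        hence "z = a1" using h ends_a False by auto
        thus ?thesis using True \<open>exb \<in> F'\<close> ends'_simps col unfolding \<phi>_def \<alpha>_def by auto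
      next
        case not_eaa1: False
        have "e \<noteq> exa" using h ends_x False by auto
        hence "e \<in> F'" "e \<noteq> exc" using h not_eaa1 by auto
        moreover have "z \<in> ends' e"
          using h ends_x ends'_simps False \<open>e \<noteq> exc\<close> by (cases "e = exb") auto
        ultimately show ?thesis using not_eaa1 \<open>e \<noteq> exa\<close> unfolding \<phi>_def by auto
      qed
    next
      show "\<phi> e1 \<noteq> \<phi> e2"
      proof
        assume "\<phi> e1 = \<phi> e2"
        hence "e1 = eaa1 \<and> e2 = exb \<or> e1 = exb \<and> e2 = eaa1" using e(3) unfolding \<phi>_def
          by (auto split: if_splits)
        thus False using e(4,5) ends_x ends_a distinct_x distinct_a leaves_distinct by auto
      qed
    qed
  qed
qed (use proper_2_coloring_less[OF col'] \<open>exb \<in> F'\<close> in auto)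

lemma extend_with_exb:
  assumes F': "F' \<subseteq> E'" and col': "proper_2_coloring ends' F' col'" and "exb \<in> F'"
  shows "\<exists>F col. F \<subseteq> E \<and> proper_2_coloring ends F col \<and> card F' + 1 \<le> card F"
proof -
  let ?F = "F' - {exc} \<union> {exa, eaa1}"
  have "finite F'" using F' mem_E' finite_E by (auto intro: finite_subset)
  have "exa \<notin> F'" "eaa1 \<notin> F'" using F' mem_E' by auto
  hence "card ?F = card (F' - {exc}) + 2" using \<open>finite F'\<close> distinct_edges by (simp add: card_insert_if)
  moreover have "card F' \<le> card (F' - {exc}) + 1"
    using \<open>finite F'\<close> by (simp add: card_Diff_singleton_if) arith
  moreover have "?F \<subseteq> E" using F' mem_E' in_E by auto
  ultimately show ?thesis using extend_2_coloring_with_exb[OF assms]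
    by (intro exI[of _ ?F] exI[of _ "col'(exa := 1 - col' exb, eaa1 := col' exb)"]) simp
qed

lemma extend_2_coloring_without_exb_exc:
  assumes F': "F' \<subseteq> E'" and col': "proper_2_coloring ends' F' col'" and "exb \<notin> F'" "exc \<notin> F'"
  shows "proper_2_coloring ends (F' \<union> {exa}) (col'(exa := 0))"
    (is "proper_2_coloring ends ?F ?col")
proof (rule proper_2_coloringI)
  have not_in: "exa \<notin> F'" "eaa1 \<notin> F'" "eaa2 \<notin> F'" using F' mem_E' by auto
  fix z e1 e2 assume e: "e1 \<in> ?F" "e2 \<in> ?F" "e1 \<noteq> e2" "z \<in> ends e1" "z \<in> ends e2"
  have at_xa: "e = exa" if "e \<in> ?F" "x \<in> ends e \<or> a \<in> ends e" for e
  proof -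
    have "e \<in> E" using that F' mem_E' in_E by auto
    hence "e \<in> {exa, exb, exc} \<or> e \<in> {exa, eaa1, eaa2}" using that not_at_x not_at_a by blast
    thus "e = exa" using that not_in assms(3,4) by auto
  qed
  show "?col e1 \<noteq> ?col e2"
  proof (cases "z = x \<or> z = a")
    case True thus ?thesis using at_xa e by metis
  next
    case False
    show ?thesis
    proof (rule proper_2_coloring_neq_via_map[OF col' e(1,2,4,5), where \<phi> = id])
      fix e assume h: "e \<in> ?F" "z \<in> ends e"
      have "e \<noteq> exa" using h ends_x False by auto
      hence "e \<in> F'" "e \<noteq> exb" "e \<noteq> exc" using h assms(3,4) by auto
      thus "id e \<in> F' \<and> z \<in> ends' (id e) \<and> col' (id e) = ?col e"
        using h ends'_simps \<open>e \<noteq> exa\<close> by auto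
    qed (use e in simp)
  qed
qed (use proper_2_coloring_less[OF col'] in auto)

text \<open>The case of a colored \<open>exc\<close> is the case of a colored \<open>exb\<close> after exchanging the roles of
  \<open>b, a1\<close> and \<open>c, a2\<close>.\<close>
lemma nu_reduced: "nu 2 E' ends' + 1 \<le> nu 2 E ends"
proof (rule nu_2_add_le[OF finite_E])
  show "finite E'" using finite_E unfolding E'_def by auto
  fix F' col' assume F': "F' \<subseteq> E'" and col': "proper_2_coloring ends' F' col'"
  interpret swapped: claw_pair V E ends x a c b a2 a1 exa exc exb eaa2 eaa1
    using in_E ends_x ends_a distinct_x distinct_a leaves_x leaves_a
    by unfold_locales (auto simp: adjacent_commute)
  have "swapped.E' = E'" unfolding E'_def swapped.E'_def by auto
  moreover have "swapped.ends' = ends'"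
    unfolding ends'_def swapped.ends'_def using distinct_edges by (auto simp: fun_upd_twist)
  ultimately have swapped: "exc \<in> F' \<Longrightarrow>
      \<exists>F col. F \<subseteq> E \<and> proper_2_coloring ends F col \<and> card F' + 1 \<le> card F"
    using swapped.extend_with_exb[of F' col'] F' col' by simp
  show "\<exists>F col. F \<subseteq> E \<and> proper_2_coloring ends F col \<and> card F' + 1 \<le> card F"
  proof (cases "exb \<in> F' \<or> exc \<in> F'")
    case True thus ?thesis using extend_with_exb[OF F' col'] swapped by blast
  next
    case False
    have "finite F'" using F' mem_E' finite_E by (auto intro: finite_subset)
    moreover have "exa \<notin> F'" using F' mem_E' by auto
    ultimately have "card (F' \<union> {exa}) = card F' + 1" by simp
    moreover have "F' \<union> {exa} \<subseteq> E" using F' mem_E' in_E by auto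
    ultimately show ?thesis using extend_2_coloring_without_exb_exc[OF F' col'] False
      by (intro exI[of _ "F' \<union> {exa}"] exI[of _ "col'(exa := 0)"]) simp
  qed
qed

lemma reducible: "reducible V E ends"
  by (rule reducibleI[where cA = 2 and cB = 0, OF reduced_cubic_multigraph card_V' _ _ nu_reduced])
    (use claw_count_reduced in simp_all)

end

subsection \<open>A claw centre next to a digon\<close>

text \<open>A claw centre \<open>x\<close> with leaves \<open>w, b, c\<close>, where \<open>w\<close> is joined to both ends of a digon
  \<open>u v\<close>: delete \<open>x, w, u, v\<close> and let \<open>exb\<close> join \<open>b\<close> with \<open>c\<close>.\<close>
locale claw_digon = cubic_multigraph +
  fixes x w b c u v :: 'v and exw exb exc ewu ewv p q :: 'e
  assumes in_E: "exw \<in> E" "exb \<in> E" "exc \<in> E" "ewu \<in> E" "ewv \<in> E" "p \<in> E" "q \<in> E"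
    and ends_x: "ends exw = {x, w}" "ends exb = {x, b}" "ends exc = {x, c}"
    and ends_w: "ends ewu = {w, u}" "ends ewv = {w, v}"
    and ends_pq: "ends p = {u, v}" "ends q = {u, v}"
    and pq: "p \<noteq> q" and distinct_V: "distinct [x, w, b, c, u, v]"
    and leaves_x: "\<not> adjacent E ends w b" "\<not> adjacent E ends w c" "\<not> adjacent E ends b c"
begin

definition V' :: "'v set" where "V' = V - {x, w, u, v}"
definition E' :: "'e set" where "E' = E - {exw, exc, ewu, ewv, p, q}"
definition ends' :: "'e \<Rightarrow> 'v set" where "ends' = ends(exb := {b, c})"

lemma in_V: "x \<in> V" "w \<in> V" "b \<in> V" "c \<in> V" "u \<in> V" "v \<in> V"
  using ends_in_V in_E ends_x ends_w ends_pq by auto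

lemma distinct_edges: "distinct [exw, exb, exc, ewu, ewv, p, q]"
  using ends_x ends_w ends_pq distinct_V pq by (auto simp: doubleton_eq_iff)

lemma incident_edges:
  "incident E ends x = {exw, exb, exc}" "incident E ends w = {exw, ewu, ewv}"
  "incident E ends u = {ewu, p, q}" "incident E ends v = {ewv, p, q}"
proof -
  show "incident E ends x = {exw, exb, exc}"
    by (rule incident_eqI[OF in_V(1)]) (use in_E ends_x distinct_edges in \<open>simp_all add: incident_def\<close>)
  show "incident E ends w = {exw, ewu, ewv}"
    by (rule incident_eqI[OF in_V(2)])
      (use in_E ends_x ends_w distinct_edges in \<open>simp_all add: incident_def\<close>)
  show "incident E ends u = {ewu, p, q}"
    by (rule incident_eqI[OF in_V(5)])
      (use in_E ends_w ends_pq distinct_edges in \<open>simp_all add: incident_def\<close>)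
  show "incident E ends v = {ewv, p, q}"
    by (rule incident_eqI[OF in_V(6)])
      (use in_E ends_w ends_pq distinct_edges in \<open>simp_all add: incident_def\<close>)
qed

lemma not_at_deleted:
  "e \<in> E \<Longrightarrow> e \<notin> {exw, exb, exc, ewu, ewv, p, q} \<Longrightarrow> x \<notin> ends e \<and> w \<notin> ends e \<and> u \<notin> ends e \<and> v \<notin> ends e"
  using mem_incident_eqD[OF _ _ incident_edges(1)] mem_incident_eqD[OF _ _ incident_edges(2)]
    mem_incident_eqD[OF _ _ incident_edges(3)] mem_incident_eqD[OF _ _ incident_edges(4)] by blast

lemma claw_centre_x: "claw_centre V E ends x"
  by (rule claw_centreI[OF in_V(1-4) _ in_E(1) ends_x(1) in_E(2) ends_x(2) in_E(3) ends_x(3) leaves_x])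
    (use distinct_V in auto)

lemma ends'_simps: "ends' exb = {b, c}" "e \<noteq> exb \<Longrightarrow> ends' e = ends e"
  unfolding ends'_def by auto

lemma mem_E': "e \<in> E' \<longleftrightarrow> e \<in> E \<and> e \<notin> {exw, exc, ewu, ewv, p, q}"
  unfolding E'_def by auto

lemma reduced_multigraph: "multigraph V' E' ends'"
  unfolding multigraph_def
proof (intro conjI)
  show "finite V'" "finite E'" using finite_V finite_E unfolding V'_def E'_def by auto
  show "\<forall>e\<in>E'. ends' e \<subseteq> V' \<and> card (ends' e) = 2"
  proof
    fix e assume e: "e \<in> E'"
    show "ends' e \<subseteq> V' \<and> card (ends' e) = 2"
    proof (cases "e = exb")
      case True
      moreover have "{b, c} \<subseteq> V'" using in_V distinct_V unfolding V'_def by auto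
      moreover have "card {b, c} = 2" using distinct_V by auto
      ultimately show ?thesis using ends'_simps by auto
    next
      case False
      have "e \<in> E" "e \<notin> {exw, exc, ewu, ewv, p, q}" using e mem_E' by auto
      hence "x \<notin> ends e \<and> w \<notin> ends e \<and> u \<notin> ends e \<and> v \<notin> ends e" using not_at_deleted False by auto
      moreover have "ends' e = ends e" using ends'_simps False by auto
      moreover have "ends e \<subseteq> V" "card (ends e) = 2"
        using multigraph \<open>e \<in> E\<close> unfolding multigraph_def by auto
      ultimately show ?thesis unfolding V'_def by auto
    qed
  qed
qed

lemma reduced_incident:
  "{e\<in>E'. c \<in> ends' e} = insert exb ({e\<in>E. c \<in> ends e} - {exc})"
  "y \<in> V' \<Longrightarrow> y \<noteq> c \<Longrightarrow> {e\<in>E'. y \<in> ends' e} = {e\<in>E. y \<in> ends e}"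
proof -
  have "e \<in> E' \<and> c \<in> ends' e \<longleftrightarrow> e \<in> insert exb ({e\<in>E. c \<in> ends e} - {exc})" for e
  proof (cases "e \<in> {exw, exb, exc, ewu, ewv, p, q}")
    case True thus ?thesis
      using ends'_simps mem_E' in_E distinct_edges ends_x ends_w ends_pq distinct_V by auto
  qed (use ends'_simps mem_E' in auto)
  thus "{e\<in>E'. c \<in> ends' e} = insert exb ({e\<in>E. c \<in> ends e} - {exc})" by blast
  assume y: "y \<in> V'" "y \<noteq> c"
  have "y \<noteq> x" "y \<noteq> w" "y \<noteq> u" "y \<noteq> v" using y unfolding V'_def by auto
  have "e \<in> E' \<and> y \<in> ends' e \<longleftrightarrow> e \<in> E \<and> y \<in> ends e" for e
  proof (cases "e \<in> {exw, exb, exc, ewu, ewv, p, q}")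
    case True thus ?thesis using ends'_simps mem_E' in_E distinct_edges ends_x ends_w ends_pq
        \<open>y \<noteq> x\<close> \<open>y \<noteq> w\<close> \<open>y \<noteq> u\<close> \<open>y \<noteq> v\<close> y(2) by auto
  qed (use ends'_simps mem_E' in auto)
  thus "{e\<in>E'. y \<in> ends' e} = {e\<in>E. y \<in> ends e}" by blast
qed

lemma reduced_cubic: "cubic V' E' ends'"
  unfolding cubic_def degree_def
proof
  fix y assume y: "y \<in> V'"
  have deg: "card {e\<in>E. y \<in> ends e} = 3" using cubic y unfolding cubic_def degree_def V'_def by auto
  have fin: "finite {e\<in>E. y \<in> ends e}" using finite_E by auto
  show "card {e\<in>E'. y \<in> ends' e} = 3"
  proof (cases "y = c")
    case True
    have "exc \<in> {e\<in>E. c \<in> ends e}" "exb \<notin> {e\<in>E. c \<in> ends e}" using in_E ends_x distinct_V by auto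
    thus ?thesis using True reduced_incident(1) deg card_insert_Diff_swap fin by metis
  next
    case False thus ?thesis using reduced_incident(2)[OF y False] deg by simp
  qed
qed

lemma reduced_cubic_multigraph: "cubic_multigraph V' E' ends'"
  using reduced_multigraph reduced_cubic by unfold_locales

lemma card_V': "card V' + 4 = card V"
  unfolding V'_def using card_Diff_add_card[OF finite_V, of "{x, w, u, v}"] in_V distinct_V by simp

text \<open>All neighbours of \<open>w, u, v\<close> are deleted and \<open>x\<close> is a claw centre, so a short cycle at a
  surviving vertex avoids the deleted vertices.\<close>
lemma claw_count_reduced: "claw_count V' E' ends' + 1 \<le> claw_count V E ends"
proof -
  have "{y\<in>V'. claw_centre V' E' ends' y} \<subseteq> {y\<in>V. claw_centre V E ends y} - {x}"
  proof
    fix y assume "y \<in> {y\<in>V'. claw_centre V' E' ends' y}"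
    hence y: "y \<in> V'" and claw: "claw_centre V' E' ends' y" by auto
    have "y \<notin> {x, w, u, v}" "y \<in> V" using y unfolding V'_def by auto
    have neighbour: "r \<notin> {w, u, v}" if "e \<in> E" "ends e = {y, r}" for e r
    proof
      assume r: "r \<in> {w, u, v}"
      hence "e \<in> {exw, exb, exc, ewu, ewv, p, q}" using not_at_deleted that by blast
      hence "ends e \<subseteq> {x, w, u, v} \<or> ends e = {x, b} \<or> ends e = {x, c}"
        using ends_x ends_w ends_pq by auto
      moreover have "r \<notin> {x, b}" "r \<notin> {x, c}" using r distinct_V by auto
      ultimately show False using that(2) r \<open>y \<notin> {x, w, u, v}\<close> by auto
    qed
    have "claw_centre V E ends y"
    proof (rule ccontr)
      assume "\<not> claw_centre V E ends y"
      hence "on_short_cycle E ends y" using on_short_cycle_if_not_claw_centre \<open>y \<in> V\<close> by blast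
      hence "on_short_cycle E' ends' y"
      proof (rule on_short_cycle_delete[OF _ \<open>y \<notin> {x, w, u, v}\<close>])
        fix e1 e2 r s assume cycle: "e1 \<in> E" "e2 \<in> E" "e1 \<noteq> e2" "ends e1 = {y, r}" "ends e2 = {y, s}"
          "r = s \<or> adjacent E ends r s"
        have "r \<noteq> x" "s \<noteq> x" using short_cycle_avoids_claw_centres[OF cycle] claw_centre_x by auto
        thus "r \<notin> {x, w, u, v} \<and> s \<notin> {x, w, u, v}"
          using neighbour[OF cycle(1,4)] neighbour[OF cycle(2,5)] by blast
      next
        fix e assume e: "e \<in> E" "ends e \<inter> {x, w, u, v} = {}"
        hence "e \<notin> {exw, exb, exc, ewu, ewv, p, q}" using ends_x ends_w ends_pq by auto
        thus "e \<in> E' \<and> ends' e = ends e" using e mem_E' ends'_simps by auto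
      qed
      thus False
        using cubic_multigraph.not_claw_centre_if_on_short_cycle[OF reduced_cubic_multigraph] claw
        by blast
    qed
    thus "y \<in> {y\<in>V. claw_centre V E ends y} - {x}" using \<open>y \<in> V\<close> \<open>y \<notin> {x, w, u, v}\<close> by auto
  qed
  moreover have "{x} \<subseteq> {y\<in>V. claw_centre V E ends y}" using claw_centre_x in_V by auto
  ultimately have "card {y\<in>V'. claw_centre V' E' ends' y} + card {x} \<le> claw_count V E ends"
    unfolding claw_count_def using finite_V by (intro card_add_le_if_subset_Diff) auto
  thus ?thesis unfolding claw_count_def by simp
qed

text \<open>The color \<open>\<beta>\<close> of \<open>exb\<close> (now \<open>b c\<close>) is kept on \<open>x b\<close>, and the path \<open>x w u v\<close> is
  colored alternately starting with the other color.\<close>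
lemma extend_2_coloring:
  assumes F': "F' \<subseteq> E'" and col': "proper_2_coloring ends' F' col'"
    and \<beta>_def: "\<beta> = (if exb \<in> F' then col' exb else 0)"
  shows "proper_2_coloring ends (F' \<union> {exw, ewu, p}) (col'(exw := 1 - \<beta>, ewu := \<beta>, p := 1 - \<beta>))"
    (is "proper_2_coloring ends ?F ?col")
proof (rule proper_2_coloringI)
  have \<beta>: "\<beta> < 2" unfolding \<beta>_def using proper_2_coloring_less[OF col'] by auto
  thus "?col e < 2" if "e \<in> ?F" for e using that proper_2_coloring_less[OF col'] by auto
  have not_in: "exw \<notin> F'" "exc \<notin> F'" "ewu \<notin> F'" "ewv \<notin> F'" "p \<notin> F'" "q \<notin> F'"
    using F' mem_E' by auto
  fix z e1 e2 assume e: "e1 \<in> ?F" "e2 \<in> ?F" "e1 \<noteq> e2" "z \<in> ends e1" "z \<in> ends e2"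
  show "?col e1 \<noteq> ?col e2"
  proof (cases "z \<in> {x, w, u, v}")
    case True
    have col: "?col exw = 1 - \<beta>" "?col ewu = \<beta>" "?col p = 1 - \<beta>" "exb \<in> F' \<Longrightarrow> ?col exb = \<beta>"
      unfolding \<beta>_def using distinct_edges by auto
    have "1 - \<beta> \<noteq> \<beta>" using \<beta> by arith
    have FE: "?F \<subseteq> E" using F' mem_E' in_E by auto
    have "e1 \<in> {exw, exb, exc, ewu, ewv, p, q}" "e2 \<in> {exw, exb, exc, ewu, ewv, p, q}"
      using not_at_deleted FE e True by blast+
    moreover have "exc \<notin> ?F" "ewv \<notin> ?F" "q \<notin> ?F" using not_in distinct_edges by auto
    ultimately have in4: "e1 \<in> {exw, exb, ewu, p}" "e2 \<in> {exw, exb, ewu, p}" using e by auto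
    moreover have "exb \<in> ?F \<Longrightarrow> exb \<in> F'" using distinct_edges by auto
    ultimately have cc: "?col e1 = (if e1 = exw \<or> e1 = p then 1 - \<beta> else \<beta>)"
      "?col e2 = (if e2 = exw \<or> e2 = p then 1 - \<beta> else \<beta>)" using col e(1,2) by auto
    have "ends exw \<inter> ends p = {}" "ends exb \<inter> ends ewu = {}" using ends_x ends_w ends_pq distinct_V by auto
    hence "{e1, e2} \<noteq> {exw, p}" "{e1, e2} \<noteq> {exb, ewu}" using e(4,5) by (auto simp: doubleton_eq_iff)
    hence "(e1 = exw \<or> e1 = p) \<noteq> (e2 = exw \<or> e2 = p)" using in4 e(3) by auto
    thus ?thesis using cc \<open>1 - \<beta> \<noteq> \<beta>\<close> by auto
  next
    case False
    show ?thesis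
    proof (rule proper_2_coloring_neq_via_map[OF col' e(1,2,4,5), where \<phi> = id])
      fix e assume h: "e \<in> ?F" "z \<in> ends e"
      have "e \<notin> {exw, ewu, p}" using h ends_x ends_w ends_pq False by auto
      hence "e \<in> F'" using h by auto
      moreover have "z \<in> ends' e" using h ends'_simps ends_x False by (cases "e = exb") auto
      ultimately show "id e \<in> F' \<and> z \<in> ends' (id e) \<and> col' (id e) = ?col e"
        using \<open>e \<notin> {exw, ewu, p}\<close> by auto
    qed (use e in simp)
  qed
qed

lemma nu_reduced: "nu 2 E' ends' + 3 \<le> nu 2 E ends"
proof (rule nu_2_add_le[OF finite_E])
  show "finite E'" using finite_E unfolding E'_def by auto
  fix F' col' assume F': "F' \<subseteq> E'" and col': "proper_2_coloring ends' F' col'"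
  define \<beta> where "\<beta> = (if exb \<in> F' then col' exb else 0)"
  have "finite F'" using F' mem_E' finite_E by (auto intro: finite_subset)
  have "exw \<notin> F'" "ewu \<notin> F'" "p \<notin> F'" using F' mem_E' by auto
  hence "card (F' \<union> {exw, ewu, p}) = card F' + 3"
    using \<open>finite F'\<close> distinct_edges by (simp add: card_insert_if)
  moreover have "F' \<union> {exw, ewu, p} \<subseteq> E" using F' mem_E' in_E by auto
  ultimately show "\<exists>F col. F \<subseteq> E \<and> proper_2_coloring ends F col \<and> card F' + 3 \<le> card F"
    using extend_2_coloring[OF F' col' \<beta>_def]
    by (intro exI[of _ "F' \<union> {exw, ewu, p}"] exI[of _ "col'(exw := 1 - \<beta>, ewu := \<beta>, p := 1 - \<beta>)"])
      simp
qed

lemma reducible: "reducible V E ends"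
  by (rule reducibleI[where cA = 1 and cB = 0, OF reduced_cubic_multigraph card_V' _ _ nu_reduced])
    (use claw_count_reduced in simp_all)

end

subsection \<open>Unavoidable reducible configurations\<close>

context cubic_multigraph
begin

lemma reducible_if_component:
  assumes "S \<subseteq> V" "\<And>e. e \<in> E \<Longrightarrow> ends e \<inter> S \<noteq> {} \<Longrightarrow> ends e \<subseteq> S"
    "N \<subseteq> E" "\<And>e. e \<in> N \<Longrightarrow> ends e \<subseteq> S" "proper_2_coloring ends N colN"
    and "S \<noteq> {}" "5 * card S \<le> 6 * card N"
  shows "reducible V E ends"
proof -
  interpret component_deletion V E ends S N colN by unfold_locales (fact assms)+
  show ?thesis using assms(6,7) by (rule reducible)
qed

lemma reducible_if_digon:
  assumes "u \<noteq> v" "p \<noteq> q" "p \<in> E" "q \<in> E" "eu \<in> E" "ev \<in> E"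
    "ends p = {u, v}" "ends q = {u, v}" "ends eu = {u, u'}" "ends ev = {v, v'}"
    "u' \<noteq> u" "u' \<noteq> v" "v' \<noteq> u" "v' \<noteq> v" "u' \<noteq> v'"
  shows "reducible V E ends"
  by (rule digon.reducible[OF digon.intro[OF cubic_multigraph_axioms digon_axioms.intro[OF assms]]])

lemma reducible_if_triangle:
  assumes "a \<noteq> b" "b \<noteq> c" "a \<noteq> c"
    "eab \<in> E" "ebc \<in> E" "eca \<in> E" "ea \<in> E" "eb \<in> E" "ec \<in> E"
    "ends eab = {a, b}" "ends ebc = {b, c}" "ends eca = {c, a}"
    "ends ea = {a, a'}" "ends eb = {b, b'}" "ends ec = {c, c'}"
    "a' \<noteq> a" "a' \<noteq> b" "a' \<noteq> c" "b' \<noteq> a" "b' \<noteq> b" "b' \<noteq> c" "c' \<noteq> a" "c' \<noteq> b" "c' \<noteq> c"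
  shows "reducible V E ends"
  by (rule triangle.reducible[OF triangle.intro[OF cubic_multigraph_axioms triangle_axioms.intro[OF assms]]])

lemma reducible_if_claw_pair:
  assumes "exa \<in> E" "exb \<in> E" "exc \<in> E" "eaa1 \<in> E" "eaa2 \<in> E"
    "ends exa = {x, a}" "ends exb = {x, b}" "ends exc = {x, c}" "ends eaa1 = {a, a1}" "ends eaa2 = {a, a2}"
    "distinct [x, a, b, c]" "distinct [a, x, a1, a2]"
    "\<not> adjacent E ends a b" "\<not> adjacent E ends a c" "\<not> adjacent E ends b c"
    "\<not> adjacent E ends x a1" "\<not> adjacent E ends x a2" "\<not> adjacent E ends a1 a2"
  shows "reducible V E ends"
  by (rule claw_pair.reducible[OF claw_pair.intro[OF cubic_multigraph_axioms claw_pair_axioms.intro[OF assms]]])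

lemma reducible_if_claw_digon:
  assumes "exw \<in> E" "exb \<in> E" "exc \<in> E" "ewu \<in> E" "ewv \<in> E" "p \<in> E" "q \<in> E"
    "ends exw = {x, w}" "ends exb = {x, b}" "ends exc = {x, c}" "ends ewu = {w, u}" "ends ewv = {w, v}"
    "ends p = {u, v}" "ends q = {u, v}" "p \<noteq> q" "distinct [x, w, b, c, u, v]"
    "\<not> adjacent E ends w b" "\<not> adjacent E ends w c" "\<not> adjacent E ends b c"
  shows "reducible V E ends"
  by (rule claw_digon.reducible[OF claw_digon.intro[OF cubic_multigraph_axioms claw_digon_axioms.intro[OF assms]]])

lemma reducible_if_triple_edge:
  assumes in_E: "e1 \<in> E" "e2 \<in> E" "e3 \<in> E" and d: "distinct [e1, e2, e3]"
    and ends_eq: "ends e1 = {v, t}" "ends e2 = {v, t}" "ends e3 = {v, t}"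
  shows "reducible V E ends"
proof -
  define S where "S = {v, t}"
  have "v \<in> V" "t \<in> V" using ends_in_V in_E ends_eq by auto
  have "t \<noteq> v" using ends_neq in_E(1) ends_eq(1) by blast
  have I: "incident E ends v = {e1, e2, e3}" by (rule incident_eq[OF \<open>v \<in> V\<close> in_E ends_eq d])
  have ends_eq': "ends e1 = {t, v}" "ends e2 = {t, v}" "ends e3 = {t, v}" using ends_eq by (simp_all add: insert_commute)
  have It: "incident E ends t = {e1, e2, e3}" by (rule incident_eq[OF \<open>t \<in> V\<close> in_E ends_eq' d])
  have closed: "\<And>e. e \<in> E \<Longrightarrow> ends e \<inter> S \<noteq> {} \<Longrightarrow> ends e \<subseteq> S"
  proof -
    fix e assume e: "e \<in> E" "ends e \<inter> S \<noteq> {}"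
    hence "v \<in> ends e \<or> t \<in> ends e" unfolding S_def by auto
    hence "e \<in> {e1, e2, e3}" using mem_incident_eqD[OF e(1) _ I] mem_incident_eqD[OF e(1) _ It] by blast
    thus "ends e \<subseteq> S" using ends_eq unfolding S_def by auto
  qed
  have "proper_2_coloring ends {e1, e2} (\<lambda>e. if e = e1 then 0 else 1)"
    unfolding proper_2_coloring_def using d by auto
  moreover have "card S = 2" "card {e1, e2} = 2" unfolding S_def using \<open>t \<noteq> v\<close> d by auto
  ultimately show ?thesis
    using reducible_if_component[OF _ closed _ _ _, of "{e1, e2}"] \<open>v \<in> V\<close> \<open>t \<in> V\<close> in_E ends_eq
    unfolding S_def by auto
qed

lemma reducible_or_parallel_edge:
  assumes in_E: "evt \<in> E" "evr \<in> E" "evs \<in> E" "ers \<in> E"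
    and ends_eq: "ends evt = {v, t}" "ends evr = {v, r}" "ends evs = {v, s}" "ends ers = {r, s}"
    and d: "distinct [v, t, r, s]"
  shows "reducible V E ends \<or> (\<exists>f. f \<in> E \<and> f \<noteq> ers \<and> ends f = {r, s})"
proof (rule ccontr)
  assume nc: "\<not> ?thesis"
  hence ng: "\<not> reducible V E ends" and nf: "\<And>f. f \<in> E \<Longrightarrow> ends f = {r, s} \<Longrightarrow> f = ers" by auto
  have vV: "v \<in> V" and rV: "r \<in> V" and sV: "s \<in> V" using ends_in_V in_E ends_eq by auto
  have dv: "distinct [evt, evr, evs]" using ends_eq d by (auto simp: doubleton_eq_iff)
  have Iv: "incident E ends v = {evt, evr, evs}" by (rule incident_eq[OF vV in_E(1-3) ends_eq(1-3) dv])
  have rr: "r \<in> ends evr" "r \<in> ends ers" "evr \<noteq> ers" using ends_eq d by (auto simp: doubleton_eq_iff)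
  obtain fr where fr: "fr \<in> E" "r \<in> ends fr" "distinct [evr, ers, fr]" "incident E ends r = {evr, ers, fr}"
    using obtain_third_incident[OF rV in_E(2) in_E(4) rr] by blast
  obtain r' where r': "ends fr = {r, r'}" "r' \<noteq> r" using other_end[OF fr(1,2)] by blast
  have ss: "s \<in> ends evs" "s \<in> ends ers" "evs \<noteq> ers" using ends_eq d by (auto simp: doubleton_eq_iff)
  obtain fs where fs: "fs \<in> E" "s \<in> ends fs" "distinct [evs, ers, fs]" "incident E ends s = {evs, ers, fs}"
    using obtain_third_incident[OF sV in_E(3) in_E(4) ss] by blast
  obtain s' where s': "ends fs = {s, s'}" "s' \<noteq> s" using other_end[OF fs(1,2)] by blast
  have r's: "r' \<noteq> s"
  proof
    assume "r' = s" hence "ends fr = {r, s}" using r' by simp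
    thus False using nf[OF fr(1)] fr(3) by auto
  qed
  have s'r: "s' \<noteq> r"
  proof
    assume "s' = r" hence "ends fs = {r, s}" using s' by (simp add: insert_commute)
    thus False using nf[OF fs(1)] fs(3) by auto
  qed
  have r'v: "r' \<noteq> v"
  proof
    assume "r' = v"
    hence "v \<in> ends fr" using r' by simp
    hence "fr \<in> {evt, evr, evs}" using mem_incident_eqD[OF fr(1) _ Iv] by simp
    thus False using fr(3) r' \<open>r' = v\<close> ends_eq d by (auto simp: doubleton_eq_iff)
  qed
  have s'v: "s' \<noteq> v"
  proof
    assume "s' = v"
    hence "v \<in> ends fs" using s' by simp
    hence "fs \<in> {evt, evr, evs}" using mem_incident_eqD[OF fs(1) _ Iv] by simp
    thus False using fs(3) s' \<open>s' = v\<close> ends_eq d by (auto simp: doubleton_eq_iff)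
  qed
  have "ends evs = {s, v}" using ends_eq by (simp add: insert_commute)
  have "reducible V E ends"
    by (rule reducible_if_triangle[OF _ _ _ in_E(2) in_E(4) in_E(3) in_E(1) fr(1) fs(1) ends_eq(2) ends_eq(4) \<open>ends evs = {s, v}\<close>
          ends_eq(1) r'(1) s'(1)]) (use d r' s' r's s'r r'v s'v in auto)
  thus False using ng by simp
qed

lemma reducible_if_digon_with_distinct_exits:
  assumes in_E: "e1 \<in> E" "e2 \<in> E" "e3 \<in> E" "ey \<in> E"
    and ends_eq: "ends e1 = {v, y}" "ends e2 = {v, y}" "ends e3 = {v, t}" "ends ey = {y, y'}"
    and d: "distinct [e1, e2, e3]" "distinct [e1, e2, ey]" and "t \<noteq> y" "y' \<noteq> t"
  shows "reducible V E ends"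
proof -
  have "v \<in> V" using ends_in_V in_E ends_eq by auto
  have yv: "y \<noteq> v" "t \<noteq> v" "y' \<noteq> y" using ends_neq in_E ends_eq by blast+
  have Iv: "incident E ends v = {e1, e2, e3}" by (rule incident_eq[OF \<open>v \<in> V\<close> in_E(1-3) ends_eq(1-3) d(1)])
  have "y' \<noteq> v"
  proof
    assume "y' = v" hence "ends ey = {v, y}" using ends_eq(4) by (simp add: insert_commute)
    thus False using incident_edge_cases[OF Iv ends_eq(1-3) _ _ _ in_E(4)] yv d \<open>t \<noteq> y\<close> by auto
  qed
  thus ?thesis
    using reducible_if_digon[OF _ _ in_E ends_eq] yv d \<open>t \<noteq> y\<close> \<open>y' \<noteq> t\<close> by auto
qed

text \<open>Two digons \<open>u v\<close> and \<open>z1 z2\<close>, hanging from the ends of an edge \<open>w z\<close>, form a component on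
  six vertices containing five edges colored alternately along the path \<open>u v w z z1 z2\<close>.\<close>
lemma reducible_if_two_pendant_digons:
  assumes Iw: "incident E ends w = {ewu, ewv, ewz}" and Iu: "incident E ends u = {ewu, p, q}"
    and Iv: "incident E ends v = {ewv, p, q}" and Iz: "incident E ends z = {ewz, g1, g2}"
    and ends_eq: "ends ewu = {w, u}" "ends ewv = {w, v}" "ends ewz = {w, z}" "ends p = {u, v}"
      "ends q = {u, v}" "ends g1 = {z, z1}" "ends g2 = {z, z2}" "ends h = {z1, z2}" "ends f = {z1, z2}"
    and hf: "h \<in> E" "f \<in> E" "f \<noteq> h" and dS: "distinct [w, u, v, z, z1, z2]"
  shows "reducible V E ends"
proof -
  define S where "S = {w, u, v, z, z1, z2}"
  define N where "N = {p, ewv, ewz, g1, h}"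
  define colN where "colN = (\<lambda>e. if e = p \<or> e = ewz \<or> e = h then 0 else 1 :: nat)"
  have in_E: "ewu \<in> E" "ewv \<in> E" "ewz \<in> E" "p \<in> E" "q \<in> E" "g1 \<in> E" "g2 \<in> E"
    using Iw Iu Iz unfolding incident_def by auto
  have SV: "S \<subseteq> V" unfolding S_def using ends_in_V in_E ends_eq(1,2,3,6,7) by auto
  have z12: "z1 \<in> V" "z2 \<in> V" using SV unfolding S_def by auto
  have ends_eq': "ends g1 = {z1, z}" "ends g2 = {z2, z}" "ends h = {z2, z1}" "ends f = {z2, z1}"
    using ends_eq by (simp_all add: insert_commute)
  have "distinct [g1, h, f]" "distinct [g2, h, f]" using ends_eq(6-9) hf(3) dS by (auto simp: doubleton_eq_iff)
  hence I1: "incident E ends z1 = {g1, h, f}" and I2: "incident E ends z2 = {g2, h, f}"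
    using incident_eq[OF z12(1) in_E(6) hf(1,2) ends_eq'(1) ends_eq(8,9)] incident_eq[OF z12(2) in_E(7) hf(1,2) ends_eq'(2-4)]
    by blast+
  have inc_S: "e \<in> {ewu, ewv, ewz, p, q, g1, g2, h, f}" if "e \<in> E" "x \<in> S" "x \<in> ends e" for e x
  proof -
    have "e \<in> incident E ends x" using that unfolding incident_def by simp
    moreover have "x = w \<or> x = u \<or> x = v \<or> x = z \<or> x = z1 \<or> x = z2" using \<open>x \<in> S\<close> unfolding S_def by simp
    ultimately show ?thesis using Iw Iu Iv Iz I1 I2 by auto
  qed
  have in_S: "ends e \<subseteq> S" if "e \<in> {ewu, ewv, ewz, p, q, g1, g2, h, f}" for e
    using that ends_eq unfolding S_def by auto
  have closed: "\<And>e. e \<in> E \<Longrightarrow> ends e \<inter> S \<noteq> {} \<Longrightarrow> ends e \<subseteq> S" using inc_S in_S by blast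
  have NE: "N \<subseteq> E" unfolding N_def using in_E hf by auto
  have NS: "\<And>e. e \<in> N \<Longrightarrow> ends e \<subseteq> S" using in_S unfolding N_def by auto
  have dN: "distinct [p, ewv, ewz, g1, h]" using ends_eq(2,3,4,6,8) dS by (auto simp: doubleton_eq_iff)
  have pN: "proper_2_coloring ends N colN"
  proof (rule proper_2_coloringI)
    fix e assume "e \<in> N" thus "colN e < 2" unfolding colN_def by auto
  next
    fix x e1 e2 assume e: "e1 \<in> N" "e2 \<in> N" "e1 \<noteq> e2" "x \<in> ends e1" "x \<in> ends e2"
    have m0: "\<And>a b. a \<in> {p, ewz, h} \<Longrightarrow> b \<in> {p, ewz, h} \<Longrightarrow> a \<noteq> b \<Longrightarrow> ends a \<inter> ends b = {}"
    proof -
      have "ends p \<inter> ends ewz = {}" "ends p \<inter> ends h = {}" "ends ewz \<inter> ends h = {}"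
        using ends_eq(3,4,8) dS by auto
      thus "\<And>a b. a \<in> {p, ewz, h} \<Longrightarrow> b \<in> {p, ewz, h} \<Longrightarrow> a \<noteq> b \<Longrightarrow> ends a \<inter> ends b = {}"
        by auto
    qed
    have m1: "ends ewv \<inter> ends g1 = {}" using ends_eq(2,6) dS by auto
    have c0: "\<And>a. a \<in> {p, ewz, h} \<Longrightarrow> colN a = 0" unfolding colN_def by auto
    have c1: "\<And>a. a \<in> {ewv, g1} \<Longrightarrow> colN a = 1" unfolding colN_def using dN by auto
    have NN: "N = {p, ewz, h} \<union> {ewv, g1}" unfolding N_def by auto
    show "colN e1 \<noteq> colN e2"
    proof (cases "e1 \<in> {p, ewz, h}")
      case True
      hence "e2 \<notin> {p, ewz, h}" using m0 e by blast
      hence "e2 \<in> {ewv, g1}" using e NN by auto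
      thus ?thesis using c0[OF True] c1 by simp
    next
      case False
      hence e1': "e1 \<in> {ewv, g1}" using e NN by auto
      have "e2 \<notin> {ewv, g1}" using m1 e e1' by (auto simp: Int_commute)
      hence "e2 \<in> {p, ewz, h}" using e NN by auto
      thus ?thesis using c0 c1[OF e1'] by simp
    qed
  qed
  have "card S = 6" unfolding S_def using dS by simp
  moreover have "card N = 5" unfolding N_def using dN by simp
  ultimately show ?thesis using reducible_if_component[OF SV closed NE NS pN] unfolding S_def by simp
qed

lemma pendant_digon_exit:
  assumes in_E: "ewu \<in> E" "ewv \<in> E" "p \<in> E" "q \<in> E"
    and ends_eq: "ends ewu = {w, u}" "ends ewv = {w, v}" "ends p = {u, v}" "ends q = {u, v}"
    and pq: "p \<noteq> q" and d: "distinct [w, u, v]"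
  obtains ewz z g1 g2 z1 z2 where "incident E ends w = {ewu, ewv, ewz}"
    "incident E ends u = {ewu, p, q}" "incident E ends v = {ewv, p, q}"
    "incident E ends z = {ewz, g1, g2}" "distinct [ewz, g1, g2]"
    "ends ewz = {w, z}" "ends g1 = {z, z1}" "ends g2 = {z, z2}"
    "distinct [w, u, v, z]" "z1 \<notin> {w, u, v, z}" "z2 \<notin> {w, u, v, z}"
proof -
  have wV: "w \<in> V" and uV: "u \<in> V" and vV: "v \<in> V" using ends_in_V in_E ends_eq by auto
  have ends_eq': "ends ewu = {u, w}" "ends ewv = {v, w}" "ends p = {v, u}" "ends q = {v, u}"
    using ends_eq by (simp_all add: insert_commute)
  have du: "distinct [ewu, p, q]" using ends_eq d pq by (auto simp: doubleton_eq_iff)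
  have dv: "distinct [ewv, p, q]" using ends_eq d pq by (auto simp: doubleton_eq_iff)
  have Iu: "incident E ends u = {ewu, p, q}" by (rule incident_eq[OF uV in_E(1,3,4) ends_eq'(1) ends_eq(3) ends_eq(4) du])
  have Iv: "incident E ends v = {ewv, p, q}" by (rule incident_eq[OF vV in_E(2,3,4) ends_eq'(2) ends_eq'(3) ends_eq'(4) dv])
  have ww: "w \<in> ends ewu" "w \<in> ends ewv" "ewu \<noteq> ewv" using ends_eq d by (auto simp: doubleton_eq_iff)
  obtain ewz where ewz: "ewz \<in> E" "w \<in> ends ewz" "distinct [ewu, ewv, ewz]" "incident E ends w = {ewu, ewv, ewz}"
    using obtain_third_incident[OF wV in_E(1,2) ww] by blast
  obtain z where z: "ends ewz = {w, z}" "z \<noteq> w" "z \<in> V" using other_end[OF ewz(1,2)] by blast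
  have nbu: "\<And>f s. f \<in> E \<Longrightarrow> ends f = {u, s} \<Longrightarrow> (f = ewu \<and> s = w) \<or> (f = p \<and> s = v) \<or> (f = q \<and> s = v)"
    by (rule incident_edge_cases[OF Iu ends_eq'(1) ends_eq(3) ends_eq(4)]) (use d in auto)
  have nbv: "\<And>f s. f \<in> E \<Longrightarrow> ends f = {v, s} \<Longrightarrow> (f = ewv \<and> s = w) \<or> (f = p \<and> s = u) \<or> (f = q \<and> s = u)"
    by (rule incident_edge_cases[OF Iv ends_eq'(2) ends_eq'(3) ends_eq'(4)]) (use d in auto)
  have nbw: "\<And>f s. f \<in> E \<Longrightarrow> ends f = {w, s} \<Longrightarrow> (f = ewu \<and> s = u) \<or> (f = ewv \<and> s = v) \<or> (f = ewz \<and> s = z)"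
    by (rule incident_edge_cases[OF ewz(4) ends_eq(1) ends_eq(2) z(1)]) (use d z in auto)
  have zu: "z \<noteq> u"
  proof
    assume "z = u" hence "ends ewz = {u, w}" using z by (simp add: insert_commute)
    thus False using nbu[OF ewz(1)] ewz(3) d by auto
  qed
  have zv: "z \<noteq> v"
  proof
    assume "z = v" hence "ends ewz = {v, w}" using z by (simp add: insert_commute)
    thus False using nbv[OF ewz(1)] ewz(3) d by auto
  qed
  have ez: "ends ewz = {z, w}" using z by (simp add: insert_commute)
  obtain g1 g2 where g: "distinct [ewz, g1, g2]" "incident E ends z = {ewz, g1, g2}" "g1 \<in> E" "g2 \<in> E"
     "z \<in> ends g1" "z \<in> ends g2"
    using obtain_two_more_incident[OF z(3) ewz(1)] ez by auto
  obtain z1 where z1: "ends g1 = {z, z1}" "z1 \<noteq> z" "z1 \<in> V" using other_end[OF g(3,5)] by blast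
  obtain z2 where z2: "ends g2 = {z, z2}" "z2 \<noteq> z" "z2 \<in> V" using other_end[OF g(4,6)] by blast
  have notw: "t \<noteq> w" "t \<noteq> u" "t \<noteq> v" if "f \<in> E" "ends f = {z, t}" "f \<noteq> ewz" for f t
  proof -
    show "t \<noteq> w"
    proof
      assume "t = w" hence "ends f = {w, z}" using that by (simp add: insert_commute)
      thus False using nbw[OF that(1)] that(3) zu zv by auto
    qed
    show "t \<noteq> u"
    proof
      assume "t = u" hence "ends f = {u, z}" using that by (simp add: insert_commute)
      thus False using nbu[OF that(1)] z(2) zv by auto
    qed
    show "t \<noteq> v"
    proof
      assume "t = v" hence "ends f = {v, z}" using that by (simp add: insert_commute)
      thus False using nbv[OF that(1)] z(2) zu by auto
    qed
  qed
  have z1n: "z1 \<noteq> w" "z1 \<noteq> u" "z1 \<noteq> v" using notw[OF g(3) z1(1)] g(1) by auto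
  have z2n: "z2 \<noteq> w" "z2 \<noteq> u" "z2 \<noteq> v" using notw[OF g(4) z2(1)] g(1) by auto
  show ?thesis
    using that[OF ewz(4) Iu Iv g(2,1) z(1) z1(1) z2(1)] d z(2) zu zv z1n z1(2) z2n z2(2) by auto
qed

lemma reducible_if_pendant_digon:
  assumes in_E: "ewu \<in> E" "ewv \<in> E" "p \<in> E" "q \<in> E"
    and ends_eq: "ends ewu = {w, u}" "ends ewv = {w, v}" "ends p = {u, v}" "ends q = {u, v}"
    and pq: "p \<noteq> q" and d: "distinct [w, u, v]"
  shows "reducible V E ends"
proof -
  obtain ewz z g1 g2 z1 z2 where Iw: "incident E ends w = {ewu, ewv, ewz}"
    and Iu: "incident E ends u = {ewu, p, q}" and Iv: "incident E ends v = {ewv, p, q}"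
    and Iz: "incident E ends z = {ewz, g1, g2}" and dg: "distinct [ewz, g1, g2]"
    and ends_z: "ends ewz = {w, z}" "ends g1 = {z, z1}" "ends g2 = {z, z2}"
    and dz: "distinct [w, u, v, z]" "z1 \<notin> {w, u, v, z}" "z2 \<notin> {w, u, v, z}"
    using pendant_digon_exit[OF assms] .
  have in_E': "ewz \<in> E" "g1 \<in> E" "g2 \<in> E" using Iw Iz unfolding incident_def by auto
  have ez: "ends ewz = {z, w}" using ends_z(1) by (simp add: insert_commute)
  show ?thesis
  proof (cases "z1 = z2")
    case True
    have g12: "ends g1 = {z, z1}" "ends g2 = {z, z1}" using ends_z True by auto
    have "z1 \<in> V" using ends_in_V in_E'(2) ends_z(2) by auto
    moreover have yy: "z1 \<in> ends g1" "z1 \<in> ends g2" "g1 \<noteq> g2" using g12 dg by auto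
    ultimately obtain ey where ey: "ey \<in> E" "z1 \<in> ends ey" "distinct [g1, g2, ey]"
      using obtain_third_incident[OF _ in_E'(2,3)] by metis
    obtain y' where y': "ends ey = {z1, y'}" "y' \<noteq> z1" using other_end[OF ey(1,2)] by blast
    have "y' \<noteq> w"
    proof
      assume "y' = w" hence "ends ey = {w, z1}" using y' by (simp add: insert_commute)
      thus False using incident_edge_cases[OF Iw ends_eq(1,2) ends_z(1) _ _ _ ey(1)] dz by auto
    qed
    moreover have "distinct [g1, g2, ewz]" using dg by auto
    ultimately show ?thesis
      using reducible_if_digon_with_distinct_exits[OF in_E'(2,3,1) ey(1) g12 ez y'(1) _ ey(3)] dz by auto
  next
    case False
    show ?thesis
    proof (cases "on_short_cycle E ends z")
      case False
      have "\<not> adjacent E ends w z1" "\<not> adjacent E ends w z2" "\<not> adjacent E ends z1 z2"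
        using no_short_cycle_cases[OF Iz dg ez ends_z(2,3) False] by auto
      thus ?thesis
        by (intro reducible_if_claw_digon[OF in_E'(1-3) in_E ez ends_z(2,3) ends_eq pq])
           (use d dz \<open>z1 \<noteq> z2\<close> in auto)
    next
      case True
      have "\<not> adjacent E ends w z1" "\<not> adjacent E ends w z2"
        using not_adjacent_if_not_neighbour[OF Iw ends_eq(1,2) ends_z(1)] dz by auto
      hence "adjacent E ends z1 z2"
        using short_cycle_cases[OF Iz ez ends_z(2,3) True] dz \<open>z1 \<noteq> z2\<close> by auto
      then obtain h where h: "h \<in> E" "ends h = {z1, z2}" by (rule adjacentE)
      have "distinct [z, w, z1, z2]" using dz \<open>z1 \<noteq> z2\<close> by auto
      hence "reducible V E ends \<or> (\<exists>f. f \<in> E \<and> f \<noteq> h \<and> ends f = {z1, z2})"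
        by (rule reducible_or_parallel_edge[OF in_E'(1-3) h(1) ez ends_z(2,3) h(2)])
      moreover
      { fix f assume f: "f \<in> E" "f \<noteq> h" "ends f = {z1, z2}"
        have "reducible V E ends"
          by (rule reducible_if_two_pendant_digons[OF Iw Iu Iv Iz ends_eq(1,2) ends_z(1) ends_eq(3,4)
                ends_z(2,3) h(2) f(3) h(1) f(1,2)]) (use dz \<open>z1 \<noteq> z2\<close> in auto) }
      ultimately show ?thesis by blast
    qed
  qed
qed

lemma reducible_if_parallel_edges:
  assumes in_E: "e1 \<in> E" "e2 \<in> E" "e3 \<in> E"
    and ends_eq: "ends e1 = {v, y}" "ends e2 = {v, y}" "ends e3 = {v, t}"
    and d: "distinct [e1, e2, e3]" and ty: "t \<noteq> y"
  shows "reducible V E ends"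
proof -
  have yV: "y \<in> V" using ends_in_V in_E ends_eq by auto
  have yv: "y \<noteq> v" "t \<noteq> v" using ends_neq in_E ends_eq by blast+
  have yy: "y \<in> ends e1" "y \<in> ends e2" "e1 \<noteq> e2" using ends_eq d by auto
  obtain ey where ey: "ey \<in> E" "y \<in> ends ey" "distinct [e1, e2, ey]" "incident E ends y = {e1, e2, ey}"
    using obtain_third_incident[OF yV in_E(1,2) yy] by blast
  obtain y' where y': "ends ey = {y, y'}" "y' \<noteq> y" using other_end[OF ey(1,2)] by blast
  show ?thesis
  proof (cases "y' = t")
    case False
    thus ?thesis using reducible_if_digon_with_distinct_exits[OF in_E ey(1) ends_eq y'(1) d ey(3) ty] by simp
  next
    case True
    have "ends e3 = {t, v}" "ends ey = {t, y}" using ends_eq y' True by (simp_all add: insert_commute)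
    show ?thesis
      by (rule reducible_if_pendant_digon[OF in_E(3) ey(1) in_E(1,2) \<open>ends e3 = {t, v}\<close> \<open>ends ey = {t, y}\<close> ends_eq(1,2) yy(3)])
         (use yv ty in auto)
  qed
qed

lemma reducible_if_triangle_at:
  assumes in_E: "evt \<in> E" "evr \<in> E" "evs \<in> E"
    and ends_eq: "ends evt = {v, t}" "ends evr = {v, r}" "ends evs = {v, s}"
    and d: "distinct [v, t, r, s]" and a: "adjacent E ends r s"
  shows "reducible V E ends"
proof -
  obtain h where h: "h \<in> E" "ends h = {r, s}" using a by (rule adjacentE)
  have "reducible V E ends \<or> (\<exists>f. f \<in> E \<and> f \<noteq> h \<and> ends f = {r, s})"
    by (rule reducible_or_parallel_edge[OF in_E h(1) ends_eq h(2) d])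
  moreover
  { fix f assume f: "f \<in> E" "f \<noteq> h" "ends f = {r, s}"
    have "reducible V E ends"
      by (rule reducible_if_pendant_digon[OF in_E(2,3) h(1) f(1) ends_eq(2,3) h(2) f(3) f(2)[symmetric]]) (use d in auto) }
  ultimately show ?thesis by blast
qed

lemma reducible_if_claw_centre:
  assumes in_E: "exa \<in> E" "exb \<in> E" "exc \<in> E"
    and ends_eq: "ends exa = {x, a}" "ends exb = {x, b}" "ends exc = {x, c}"
    and d: "distinct [x, a, b, c]"
    and nx: "\<not> adjacent E ends a b" "\<not> adjacent E ends a c" "\<not> adjacent E ends b c"
  shows "reducible V E ends"
proof -
  have xV: "x \<in> V" and aV: "a \<in> V" using ends_in_V in_E ends_eq by auto
  have dx: "distinct [exa, exb, exc]" using ends_eq d by (auto simp: doubleton_eq_iff)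
  have Ix: "incident E ends x = {exa, exb, exc}" by (rule incident_eq[OF xV in_E ends_eq dx])
  have nbx: "\<And>f s. f \<in> E \<Longrightarrow> ends f = {x, s} \<Longrightarrow> (f = exa \<and> s = a) \<or> (f = exb \<and> s = b) \<or> (f = exc \<and> s = c)"
    by (rule incident_edge_cases[OF Ix ends_eq]) (use d in auto)
  have ea: "ends exa = {a, x}" using ends_eq by (simp add: insert_commute)
  obtain f1 f2 where f: "distinct [exa, f1, f2]" "incident E ends a = {exa, f1, f2}" "f1 \<in> E" "f2 \<in> E"
     "a \<in> ends f1" "a \<in> ends f2"
    using obtain_two_more_incident[OF aV in_E(1)] ends_eq by auto
  obtain a1 where a1: "ends f1 = {a, a1}" "a1 \<noteq> a" "a1 \<in> V" using other_end[OF f(3,5)] by blast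
  obtain a2 where a2: "ends f2 = {a, a2}" "a2 \<noteq> a" "a2 \<in> V" using other_end[OF f(4,6)] by blast
  have a12x: "a1 \<noteq> x" "a2 \<noteq> x"
  proof -
    show "a1 \<noteq> x"
    proof
      assume "a1 = x" hence "ends f1 = {x, a}" using a1 by (simp add: insert_commute)
      thus False using nbx[OF f(3)] f(1) d by auto
    qed
    show "a2 \<noteq> x"
    proof
      assume "a2 = x" hence "ends f2 = {x, a}" using a2 by (simp add: insert_commute)
      thus False using nbx[OF f(4)] f(1) d by auto
    qed
  qed
  have a1bc: "a1 \<noteq> b" "a1 \<noteq> c" using nx adjacentI[of f1 E ends a a1] f(3) a1 by auto
  have a2bc: "a2 \<noteq> b" "a2 \<noteq> c" using nx adjacentI[of f2 E ends a a2] f(4) a2 by auto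
  have not_adjacent_x: "\<not> adjacent E ends x a1" "\<not> adjacent E ends x a2"
    using not_adjacent_if_not_neighbour[OF Ix ends_eq] d a1(2) a2(2) a1bc a2bc by auto
  show ?thesis
  proof (cases "a1 = a2")
    case True
    show ?thesis
      by (rule reducible_if_parallel_edges[OF f(3,4) in_E(1) a1(1) _ ea]) (use a2 True f(1) a12x in auto)
  next
    case False
    show ?thesis
    proof (cases "on_short_cycle E ends a")
      case False
      have "\<not> adjacent E ends a1 a2"
        using no_short_cycle_cases[OF f(2,1) ea a1(1) a2(1) False] by auto
      thus ?thesis
        by (intro reducible_if_claw_pair[OF in_E f(3,4) ends_eq a1(1) a2(1) d _ nx not_adjacent_x])
           (use d a1 a2 a12x \<open>a1 \<noteq> a2\<close> in auto)
    next
      case True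
      hence "adjacent E ends a1 a2"
        using short_cycle_cases[OF f(2) ea a1(1) a2(1)] not_adjacent_x a12x \<open>a1 \<noteq> a2\<close> by auto
      thus ?thesis
        by (intro reducible_if_triangle_at[OF in_E(1) f(3,4) ea a1(1) a2(1)])
          (use a1 a2 a12x \<open>a1 \<noteq> a2\<close> d in auto)
    qed
  qed
qed

lemma reducible_if_three_neighbours:
  assumes I: "incident E ends v = {e1, e2, e3}" and d: "distinct [e1, e2, e3]"
    and t: "ends e1 = {v, t1}" "ends e2 = {v, t2}" "ends e3 = {v, t3}"
    and dt: "distinct [v, t1, t2, t3]"
  shows "reducible V E ends"
proof -
  have in_E: "e1 \<in> E" "e2 \<in> E" "e3 \<in> E" using I unfolding incident_def by auto
  show ?thesis
  proof (cases "on_short_cycle E ends v")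
    case False
    have "\<not> adjacent E ends t1 t2" "\<not> adjacent E ends t1 t3" "\<not> adjacent E ends t2 t3"
      using no_short_cycle_cases[OF I d t False] by auto
    thus ?thesis by (rule reducible_if_claw_centre[OF in_E t dt])
  next
    case True
    hence "adjacent E ends t1 t2 \<or> adjacent E ends t1 t3 \<or> adjacent E ends t2 t3"
      using short_cycle_cases[OF I t] dt by auto
    thus ?thesis
    proof (elim disjE)
      assume "adjacent E ends t1 t2"
      thus ?thesis by (intro reducible_if_triangle_at[OF in_E(3,1,2) t(3,1,2)]) (use dt in auto)
    next
      assume "adjacent E ends t1 t3"
      thus ?thesis by (intro reducible_if_triangle_at[OF in_E(2,1,3) t(2,1,3)]) (use dt in auto)
    next
      assume "adjacent E ends t2 t3"
      thus ?thesis by (intro reducible_if_triangle_at[OF in_E t]) (use dt in auto)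
    qed
  qed
qed

lemma reducible_if_nonempty:
  assumes "V \<noteq> {}"
  shows "reducible V E ends"
proof -
  obtain v where vV: "v \<in> V" using assms by blast
  obtain e1 e2 e3 where d: "distinct [e1, e2, e3]" and I: "incident E ends v = {e1, e2, e3}"
    using obtain_incident[OF vV] by blast
  have in_E: "e1 \<in> E" "e2 \<in> E" "e3 \<in> E" "v \<in> ends e1" "v \<in> ends e2" "v \<in> ends e3"
    using I unfolding incident_def by auto
  obtain t1 where t1: "ends e1 = {v, t1}" "t1 \<noteq> v" using other_end[OF in_E(1,4)] by blast
  obtain t2 where t2: "ends e2 = {v, t2}" "t2 \<noteq> v" using other_end[OF in_E(2,5)] by blast
  obtain t3 where t3: "ends e3 = {v, t3}" "t3 \<noteq> v" using other_end[OF in_E(3,6)] by blast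
  have d': "distinct [e1, e3, e2]" "distinct [e2, e3, e1]" using d by auto
  consider "t1 = t2" "t2 = t3" | "t1 = t2" "t3 \<noteq> t2" | "t1 = t3" "t2 \<noteq> t3" | "t2 = t3" "t1 \<noteq> t3"
    | "distinct [v, t1, t2, t3]" using t1(2) t2(2) t3(2) by auto
  thus ?thesis
  proof cases
    case 1 thus ?thesis using reducible_if_triple_edge[OF in_E(1-3) d t1(1)] t2(1) t3(1) by simp
  next
    case 2 thus ?thesis using reducible_if_parallel_edges[OF in_E(1-3) _ _ t3(1) d, of t2] t1 t2 by simp
  next
    case 3 thus ?thesis using reducible_if_parallel_edges[OF in_E(1,3,2) _ _ t2(1) d'(1), of t3] t1 t3 by simp
  next
    case 4 thus ?thesis using reducible_if_parallel_edges[OF in_E(2,3,1) _ _ t1(1) d'(2), of t3] t2 t3 by simp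
  next
    case 5 thus ?thesis by (rule reducible_if_three_neighbours[OF I d t1(1) t2(1) t3(1)])
  qed
qed

end

lemma claw_weighted_bound:
  fixes V :: "'v set" and E :: "'e set"
  assumes "cubic_multigraph V E ends"
  shows "5 * card V \<le> 6 * nu 2 E ends + 2 * claw_count V E ends"
  using assms
proof (induction "card V" arbitrary: V E ends rule: less_induct)
  case less
  show ?case
  proof (cases "V = {}")
    case False
    then obtain V' :: "'v set" and E' :: "'e set" and ends' where
      reduced: "cubic_multigraph V' E' ends'" "card V' < card V"
      "5 * card V' \<le> 6 * nu 2 E' ends' + 2 * claw_count V' E' ends' \<longrightarrow>
        5 * card V \<le> 6 * nu 2 E ends + 2 * claw_count V E ends"
      using cubic_multigraph.reducible_if_nonempty[OF less.prems] unfolding reducible_def by blast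
    thus ?thesis using less.hyps[OF reduced(2,1)] by simp
  qed simp
qed

theorem theorem8:
  fixes V :: "'v set" and E :: "'e set" and ends :: "'e \<Rightarrow> 'v set"
  assumes "multigraph V E ends" and "cubic V E ends" and "claw_free V E ends"
  shows "real (nu 2 E ends) \<ge> 5 / 6 * real (card V)"
proof -
  have "5 * card V \<le> 6 * nu 2 E ends + 2 * claw_count V E ends"
    using assms(1,2) by (intro claw_weighted_bound) unfold_locales
  moreover have "claw_count V E ends = 0" using assms(3) by (rule claw_count_eq_0_if_claw_free)
  ultimately have "real (5 * card V) \<le> real (6 * nu 2 E ends)" by simp
  thus ?thesis by simp
qed

end
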